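(* Let $R = \bigoplus_{n \ge 0} R_n$ be a Noetherian standard graded ring over a local Artinian ring $R_0$, and let $E$ be a finitely generated graded $R$-module with $\dim E = 0$. Let $d$ be the maximal degree of a minimal homogeneous generator of $E$, let $e = \ell(E)$, and let $q = \sum_{i \le d} \ell(E_i)$. Then: (i) $\operatorname{reg}(E) \le d + e - q$; (ii) $\operatorname{reg}(E) = d + e - q$ if and only if $\ell(E_t) = 1$ for all $d+1 \le t \le d+e-q$ and $\ell(E_t) = 0$ for all $t \ge d+e-q+1$.
   Context: $R_+ = \bigoplus_{n>0}R_n$. For a finitely generated graded $R$-module $E$ of dimension $r$, $a_i(E) = \sup\{n \mid H^i_{R_+}(E)_n \ne 0\}$ and $\operatorname{reg}(E) = \max\{a_i(E)+i \mid 0 \le i \le r\}$. Lengths $\ell$ are over $R_0$. *)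

theory Defs
  imports Main "HOL-Library.Extended_Real"
begin

definition is_ideal :: "'r::comm_ring_1 set \<Rightarrow> bool" where
  "is_ideal I \<longleftrightarrow> 0 \<in> I \<and> (\<forall>x\<in>I. \<forall>y\<in>I. x + y \<in> I) \<and> (\<forall>r. \<forall>x\<in>I. r * x \<in> I)"

definition is_prime_ideal :: "'r::comm_ring_1 set \<Rightarrow> bool" where
  "is_prime_ideal P \<longleftrightarrow> is_ideal P \<and> P \<noteq> UNIV \<and> (\<forall>a b. a * b \<in> P \<longrightarrow> a \<in> P \<or> b \<in> P)"

definition noetherian_ring :: "'r::comm_ring_1 itself \<Rightarrow> bool" where
  "noetherian_ring _ \<longleftrightarrow> (\<forall>I :: nat \<Rightarrow> 'r set. (\<forall>n. is_ideal (I n)) \<and> (\<forall>n. I n \<subseteq> I (Suc n))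
       \<longrightarrow> (\<exists>N. \<forall>n\<ge>N. I n = I N))"

text \<open>Ideals of a subring S (used for R_0 viewed as a ring on its own).\<close>
definition is_ideal_in :: "'r::comm_ring_1 set \<Rightarrow> 'r set \<Rightarrow> bool" where
  "is_ideal_in S I \<longleftrightarrow> I \<subseteq> S \<and> 0 \<in> I \<and> (\<forall>x\<in>I. \<forall>y\<in>I. x + y \<in> I) \<and> (\<forall>r\<in>S. \<forall>x\<in>I. r * x \<in> I)"

definition is_maximal_ideal_in :: "'r::comm_ring_1 set \<Rightarrow> 'r set \<Rightarrow> bool" where
  "is_maximal_ideal_in S M \<longleftrightarrow> is_ideal_in S M \<and> M \<noteq> S \<and>
     (\<forall>J. is_ideal_in S J \<and> M \<subseteq> J \<longrightarrow> J = M \<or> J = S)"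

definition local_ring_on :: "'r::comm_ring_1 set \<Rightarrow> bool" where
  "local_ring_on S \<longleftrightarrow> (\<exists>!M. is_maximal_ideal_in S M)"

definition artinian_ring_on :: "'r::comm_ring_1 set \<Rightarrow> bool" where
  "artinian_ring_on S \<longleftrightarrow> (\<forall>I :: nat \<Rightarrow> 'r set. (\<forall>n. is_ideal_in S (I n)) \<and> (\<forall>n. I (Suc n) \<subseteq> I n)
       \<longrightarrow> (\<exists>N. \<forall>n\<ge>N. I n = I N))"

definition graded_ring :: "(nat \<Rightarrow> 'r::comm_ring_1 set) \<Rightarrow> bool" where
  "graded_ring Rg \<longleftrightarrow>
     (\<forall>n. 0 \<in> Rg n \<and> (\<forall>x\<in>Rg n. \<forall>y\<in>Rg n. x + y \<in> Rg n) \<and> (\<forall>x\<in>Rg n. - x \<in> Rg n)) \<and>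
     1 \<in> Rg 0 \<and>
     (\<forall>m n. \<forall>a\<in>Rg m. \<forall>b\<in>Rg n. a * b \<in> Rg (m + n)) \<and>
     (\<forall>r. \<exists>!c :: nat \<Rightarrow> 'r. finite {n. c n \<noteq> 0} \<and> (\<forall>n. c n \<in> Rg n) \<and> r = (\<Sum>n\<in>{n. c n \<noteq> 0}. c n))"

definition subring_hull :: "'r::comm_ring_1 set \<Rightarrow> 'r set" where
  "subring_hull X = \<Inter>{S. X \<subseteq> S \<and> 0 \<in> S \<and> 1 \<in> S \<and> (\<forall>x\<in>S. \<forall>y\<in>S. x + y \<in> S \<and> x * y \<in> S \<and> - x \<in> S)}"

definition standard_graded :: "(nat \<Rightarrow> 'r::comm_ring_1 set) \<Rightarrow> bool" where
  "standard_graded Rg \<longleftrightarrow> graded_ring Rg \<and> subring_hull (Rg 0 \<union> Rg 1) = UNIV"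

definition Rplus :: "(nat \<Rightarrow> 'r::comm_ring_1 set) \<Rightarrow> 'r set" where
  "Rplus Rg = {r. \<exists>c :: nat \<Rightarrow> 'r. finite {n. c n \<noteq> 0} \<and> (\<forall>n. c n \<in> Rg n) \<and> c 0 = 0 \<and>
                    r = (\<Sum>n\<in>{n. c n \<noteq> 0}. c n)}"

definition graded_module :: "('r::comm_ring_1 \<Rightarrow> 'm::ab_group_add \<Rightarrow> 'm) \<Rightarrow> (nat \<Rightarrow> 'r set) \<Rightarrow> (int \<Rightarrow> 'm set) \<Rightarrow> bool" where
  "graded_module scale Rg Eg \<longleftrightarrow> module scale \<and>
     (\<forall>n. 0 \<in> Eg n \<and> (\<forall>x\<in>Eg n. \<forall>y\<in>Eg n. x + y \<in> Eg n) \<and> (\<forall>x\<in>Eg n. - x \<in> Eg n)) \<and>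
     (\<forall>m n. \<forall>a\<in>Rg m. \<forall>x\<in>Eg n. scale a x \<in> Eg (int m + n)) \<and>
     (\<forall>x. \<exists>!c :: int \<Rightarrow> 'm. finite {n. c n \<noteq> 0} \<and> (\<forall>n. c n \<in> Eg n) \<and> x = (\<Sum>n\<in>{n. c n \<noteq> 0}. c n))"

definition finitely_generated_module :: "('r::comm_ring_1 \<Rightarrow> 'm::ab_group_add \<Rightarrow> 'm) \<Rightarrow> bool" where
  "finitely_generated_module scale \<longleftrightarrow> (\<exists>G. finite G \<and> module.span scale G = UNIV)"

definition minimal_homogeneous_generators :: "('r::comm_ring_1 \<Rightarrow> 'm::ab_group_add \<Rightarrow> 'm) \<Rightarrow> (int \<Rightarrow> 'm set) \<Rightarrow> 'm set \<Rightarrow> bool" where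
  "minimal_homogeneous_generators scale Eg G \<longleftrightarrow>
     G \<subseteq> (\<Union>n. Eg n) \<and> module.span scale G = UNIV \<and> (\<forall>H. H \<subset> G \<longrightarrow> module.span scale H \<noteq> UNIV)"

text \<open>Annihilator and Krull dimension of E (= dim R/ann E).\<close>
definition annihilator :: "('r::comm_ring_1 \<Rightarrow> 'm::ab_group_add \<Rightarrow> 'm) \<Rightarrow> 'r set" where
  "annihilator scale = {r. \<forall>x. scale r x = 0}"

definition prime_chain_ann :: "('r::comm_ring_1 \<Rightarrow> 'm::ab_group_add \<Rightarrow> 'm) \<Rightarrow> nat \<Rightarrow> bool" where
  "prime_chain_ann scale k \<longleftrightarrow> (\<exists>P :: nat \<Rightarrow> 'r set.
      (\<forall>i\<le>k. is_prime_ideal (P i) \<and> annihilator scale \<subseteq> P i) \<and> (\<forall>i<k. P i \<subset> P (Suc i)))"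

text \<open>dim E = k: the supremum of lengths of chains of primes containing ann E is k
  (in particular E \<noteq> 0, since for E = 0 there is no such prime).\<close>
definition module_dim_eq :: "('r::comm_ring_1 \<Rightarrow> 'm::ab_group_add \<Rightarrow> 'm) \<Rightarrow> nat \<Rightarrow> bool" where
  "module_dim_eq scale k \<longleftrightarrow> prime_chain_ann scale k \<and> \<not> prime_chain_ann scale (Suc k)"

definition r0_submodule :: "('r::comm_ring_1 \<Rightarrow> 'm::ab_group_add \<Rightarrow> 'm) \<Rightarrow> (nat \<Rightarrow> 'r set) \<Rightarrow> 'm set \<Rightarrow> 'm set \<Rightarrow> bool" where
  "r0_submodule scale Rg M N \<longleftrightarrow> N \<subseteq> M \<and> 0 \<in> N \<and> (\<forall>x\<in>N. \<forall>y\<in>N. x + y \<in> N) \<and>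
      (\<forall>a\<in>Rg 0. \<forall>x\<in>N. scale a x \<in> N)"

definition r0_length :: "('r::comm_ring_1 \<Rightarrow> 'm::ab_group_add \<Rightarrow> 'm) \<Rightarrow> (nat \<Rightarrow> 'r set) \<Rightarrow> 'm set \<Rightarrow> enat" where
  "r0_length scale Rg M = Sup {enat k | k. \<exists>N :: nat \<Rightarrow> 'm set.
      (\<forall>i\<le>k. r0_submodule scale Rg M (N i)) \<and> (\<forall>i<k. N i \<subset> N (Suc i))}"

text \<open>H^0_{R_+}(E) = \<Gamma>_{R_+}(E) = {x. R_+^k x = 0 for some k}; R_+^k is generated by k-fold products.\<close>
definition H0_Rplus :: "('r::comm_ring_1 \<Rightarrow> 'm::ab_group_add \<Rightarrow> 'm) \<Rightarrow> (nat \<Rightarrow> 'r set) \<Rightarrow> 'm set" where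
  "H0_Rplus scale Rg = {x. \<exists>k. \<forall>a :: nat \<Rightarrow> 'r. (\<forall>i<k. a i \<in> Rplus Rg) \<longrightarrow> scale (\<Prod>i<k. a i) x = 0}"

text \<open>a_0(E) = sup{n. H^0_{R_+}(E)_n \<noteq> 0} (in the extended reals; -\<infinity> if empty).\<close>
definition a0 :: "('r::comm_ring_1 \<Rightarrow> 'm::ab_group_add \<Rightarrow> 'm) \<Rightarrow> (nat \<Rightarrow> 'r set) \<Rightarrow> (int \<Rightarrow> 'm set) \<Rightarrow> ereal" where
  "a0 scale Rg Eg = Sup ((\<lambda>n. ereal (real_of_int n)) ` {n. H0_Rplus scale Rg \<inter> Eg n \<noteq> {0}})"

text \<open>reg(E) = max{a_i(E) + i | 0 \<le> i \<le> dim E}; for modules with dim E = 0 (the only case used)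
  this is a_0(E).\<close>
definition reg_dim0 :: "('r::comm_ring_1 \<Rightarrow> 'm::ab_group_add \<Rightarrow> 'm) \<Rightarrow> (nat \<Rightarrow> 'r set) \<Rightarrow> (int \<Rightarrow> 'm set) \<Rightarrow> ereal" where
  "reg_dim0 scale Rg Eg = Max {a0 scale Rg Eg + ereal (real i) | i. i \<in> {0..(0::nat)}}"

end

theory Submission
  imports Defs "HOL-Library.Set_Algebras"
begin

text \<open>Since dim E = 0, every element of R_1 acts nilpotently on E, so only finitely many graded
  pieces E_t are nonzero; each has finite length over the Artinian ring R_0, being spanned by the
  products of the generators with monomials in generators of R_1. If T is the top nonzero degree,
  R_+ kills E_T, whence reg E = a_0(E) = T. As E is generated in degrees \<le> d, we have
  E_{t+1} = R_1 E_t for t \<ge> d, so E_t \<noteq> 0 for d \<le> t \<le> T. Hence e - q is the sum of the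
  lengths of E_t for d < t \<le> T, which is at least T - d, with equality iff all these lengths
  are 1.\<close>

section \<open>Lengths of chains in lattices of subgroups\<close>

definition strict_chain :: "('a set \<Rightarrow> bool) \<Rightarrow> 'a set \<Rightarrow> 'a set \<Rightarrow> (nat \<Rightarrow> 'a set) \<Rightarrow> nat \<Rightarrow> bool" where
  "strict_chain P A B N k \<longleftrightarrow> (\<forall>i\<le>k. P (N i) \<and> A \<subseteq> N i \<and> N i \<subseteq> B) \<and> (\<forall>i<k. N i \<subset> N (Suc i))"

definition chain_length :: "('a set \<Rightarrow> bool) \<Rightarrow> 'a set \<Rightarrow> 'a set \<Rightarrow> enat" where
  "chain_length P A B = Sup {enat k | k. \<exists>N. strict_chain P A B N k}"

lemma chain_length_ge: "strict_chain P A B N k \<Longrightarrow> enat k \<le> chain_length P A B"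
  unfolding chain_length_def by (rule Sup_upper) blast

lemma chain_length_leI: "(\<And>N k. strict_chain P A B N k \<Longrightarrow> enat k \<le> m) \<Longrightarrow> chain_length P A B \<le> m"
  unfolding chain_length_def by (rule Sup_least) auto

lemma chain_length_attained:
  assumes "chain_length P A B = enat n" "P A" "A \<subseteq> B"
  shows "\<exists>N. strict_chain P A B N n"
proof -
  let ?S = "{enat k | k. \<exists>N. strict_chain P A B N k}"
  have "strict_chain P A B (\<lambda>_. A) 0" using assms unfolding strict_chain_def by auto
  hence ne: "?S \<noteq> {}" by blast
  have eq: "chain_length P A B = (if finite ?S then Max ?S else \<infinity>)"
    unfolding chain_length_def Sup_enat_def using ne by (simp only: if_False)
  with assms(1) have fin: "finite ?S" by (metis enat.distinct(1))
  with eq assms(1) have "Max ?S = enat n" by simp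
  with Max_in[OF fin ne] show ?thesis by auto
qed

lemma chain_length_refl: "chain_length P A A = 0"
proof -
  have "chain_length P A A \<le> 0"
  proof (rule chain_length_leI)
    fix N k assume c: "strict_chain P A A N k"
    have "N i = A" if "i \<le> k" for i using c that unfolding strict_chain_def by blast
    with c show "enat k \<le> 0" unfolding strict_chain_def
      by (metis enat_0_iff(2) less_irrefl le_less not_gr_zero zero_enat_def Suc_leI psubset_eq)
  qed
  thus ?thesis by simp
qed

lemma chain_length_antimono:
  assumes "A \<subseteq> A'" "B' \<subseteq> B"
  shows "chain_length P A' B' \<le> chain_length P A B"
proof (rule chain_length_leI)
  fix N k assume "strict_chain P A' B' N k"
  hence "strict_chain P A B N k" using assms unfolding strict_chain_def by blast
  thus "enat k \<le> chain_length P A B" by (rule chain_length_ge)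
qed

lemma chain_length_le_by_strict_mono:
  assumes "\<And>X. P X \<Longrightarrow> A \<subseteq> X \<Longrightarrow> X \<subseteq> B \<Longrightarrow> Q (f X) \<and> A' \<subseteq> f X \<and> f X \<subseteq> B'"
    and "\<And>X Y. P X \<Longrightarrow> A \<subseteq> X \<Longrightarrow> Y \<subseteq> B \<Longrightarrow> P Y \<Longrightarrow> X \<subset> Y \<Longrightarrow> f X \<subset> f Y"
  shows "chain_length P A B \<le> chain_length Q A' B'"
proof (rule chain_length_leI)
  fix N k assume c: "strict_chain P A B N k"
  have "strict_chain Q A' B' (\<lambda>i. f (N i)) k"
    unfolding strict_chain_def
  proof (intro conjI allI impI)
    fix i assume "i \<le> k"
    with c have "P (N i)" "A \<subseteq> N i" "N i \<subseteq> B" unfolding strict_chain_def by auto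
    with assms(1) show "Q (f (N i))" "A' \<subseteq> f (N i)" "f (N i) \<subseteq> B'" by auto
  next
    fix i assume "i < k"
    with c have "P (N i)" "A \<subseteq> N i" "N (Suc i) \<subseteq> B" "P (N (Suc i))" "N i \<subset> N (Suc i)"
      unfolding strict_chain_def by auto
    thus "f (N i) \<subset> f (N (Suc i))" by (rule assms(2))
  qed
  thus "enat k \<le> chain_length Q A' B'" by (rule chain_length_ge)
qed

lemma strict_chain_of_weak_chain:
  assumes "\<forall>i\<le>k. P (N i) \<and> A \<subseteq> N i \<and> N i \<subseteq> B" "\<forall>i<k. N i \<subseteq> N (Suc i)"
  shows "\<exists>M. strict_chain P A B M (card {i. i < k \<and> N i \<subset> N (Suc i)})"
proof -
  have "\<exists>M. strict_chain P A B M (card {i. i < k \<and> N i \<subset> N (Suc i)})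
            \<and> M (card {i. i < k \<and> N i \<subset> N (Suc i)}) = N k"
    using assms
  proof (induction k)
    case 0
    then show ?case by (intro exI[of _ "\<lambda>_. N 0"]) (auto simp: strict_chain_def)
  next
    case (Suc k)
    let ?s = "card {i. i < k \<and> N i \<subset> N (Suc i)}"
    from Suc obtain M where M: "strict_chain P A B M ?s" "M ?s = N k" by auto
    show ?case
    proof (cases "N k \<subset> N (Suc k)")
      case True
      have "{i. i < Suc k \<and> N i \<subset> N (Suc i)} = insert k {i. i < k \<and> N i \<subset> N (Suc i)}"
        using True by auto
      hence c: "card {i. i < Suc k \<and> N i \<subset> N (Suc i)} = Suc ?s" by simp
      have "strict_chain P A B (M(Suc ?s := N (Suc k))) (Suc ?s)"
        using M True Suc.prems unfolding strict_chain_def by (auto simp: le_Suc_eq less_Suc_eq)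
      moreover have "(M(Suc ?s := N (Suc k))) (Suc ?s) = N (Suc k)" by simp
      ultimately show ?thesis unfolding c by blast
    next
      case False
      hence "N (Suc k) = N k" using Suc.prems by auto
      moreover have "{i. i < Suc k \<and> N i \<subset> N (Suc i)} = {i. i < k \<and> N i \<subset> N (Suc i)}"
        using False by (auto simp: less_Suc_eq)
      ultimately show ?thesis using M by auto
    qed
  qed
  thus ?thesis by blast
qed

definition additive_subgroup :: "'a::ab_group_add set \<Rightarrow> bool" where
  "additive_subgroup X \<longleftrightarrow> 0 \<in> X \<and> (\<forall>x\<in>X. \<forall>y\<in>X. x + y \<in> X \<and> x - y \<in> X)"

definition subgroup_lattice :: "('a::ab_group_add set \<Rightarrow> bool) \<Rightarrow> bool" where
  "subgroup_lattice P \<longleftrightarrow>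
     (\<forall>X. P X \<longrightarrow> additive_subgroup X) \<and> (\<forall>X Y. P X \<longrightarrow> P Y \<longrightarrow> P (X \<inter> Y) \<and> P (X + Y))"

lemma set_plus_mono_left: "X \<subseteq> X' \<Longrightarrow> X + C \<subseteq> X' + C"
  unfolding set_plus_def by blast

lemma set_plus_mono_right: "C \<subseteq> C' \<Longrightarrow> X + C \<subseteq> X + C'"
  unfolding set_plus_def by blast

lemma subset_set_plus_left: "0 \<in> C \<Longrightarrow> X \<subseteq> X + (C :: 'a::monoid_add set)"
  unfolding set_plus_def by force

lemma subset_set_plus_right: "0 \<in> X \<Longrightarrow> C \<subseteq> X + (C :: 'a::monoid_add set)"
  unfolding set_plus_def by force

lemma set_plus_subset_subgroup:
  "additive_subgroup B \<Longrightarrow> X \<subseteq> B \<Longrightarrow> C \<subseteq> B \<Longrightarrow> X + C \<subseteq> B"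
  unfolding set_plus_def additive_subgroup_def by auto

lemma additive_subgroup_eq_by_meet_join:
  assumes "additive_subgroup N" "additive_subgroup N'" "additive_subgroup C"
    and "N \<subseteq> N'" "N \<inter> C = N' \<inter> C" "N + C = N' + C"
  shows "N = N'"
proof
  show "N' \<subseteq> N"
  proof
    fix x assume x: "x \<in> N'"
    have "0 \<in> C" using assms(3) unfolding additive_subgroup_def by blast
    with x assms(6) have "x \<in> N + C" using subset_set_plus_left by blast
    then obtain n c where nc: "n \<in> N" "c \<in> C" "x = n + c" by (auto simp: set_plus_def)
    with x assms(2,4) have "c \<in> N'" unfolding additive_subgroup_def
      by (metis add_diff_cancel_left' subsetD)
    with nc assms(1,5) show "x \<in> N" unfolding additive_subgroup_def by blast
  qed
qed (rule assms(4))

text \<open>Intersecting with C and adding C maps a chain from A to B onto two weak chains through C;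
  by the modular law every proper step survives in at least one of them.\<close>

lemma chain_length_split_le:
  assumes P: "subgroup_lattice P" "P C" "P B" and "A \<subseteq> C" "C \<subseteq> B"
  shows "chain_length P A B \<le> chain_length P A C + chain_length P C B"
proof (rule chain_length_leI)
  fix N k assume c: "strict_chain P A B N k"
  define meet where "meet i = N i \<inter> C" for i
  define join where "join i = N i + C" for i
  let ?Imeet = "{i. i < k \<and> meet i \<subset> meet (Suc i)}" and ?Ijoin = "{i. i < k \<and> join i \<subset> join (Suc i)}"
  have sg: "additive_subgroup X" if "P X" for X using P(1) that unfolding subgroup_lattice_def by blast
  have N: "P (N i)" "A \<subseteq> N i" "N i \<subseteq> B" "additive_subgroup (N i)" if "i \<le> k" for i
    using c that sg unfolding strict_chain_def by auto
  have N_step: "N i \<subset> N (Suc i)" if "i < k" for i using c that unfolding strict_chain_def by blast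
  hence N_mono: "N i \<subseteq> N (Suc i)" if "i < k" for i using that by blast
  have "\<exists>M. strict_chain P A C M (card ?Imeet)"
    by (rule strict_chain_of_weak_chain)
      (use c P \<open>A \<subseteq> C\<close> in \<open>auto simp: strict_chain_def meet_def subgroup_lattice_def\<close>)
  then obtain M1 where M1: "strict_chain P A C M1 (card ?Imeet)" by blast
  have "\<exists>M. strict_chain P C B M (card ?Ijoin)"
  proof (rule strict_chain_of_weak_chain; intro allI impI conjI)
    fix i assume i: "i \<le> k"
    have "0 \<in> N i" using N(4)[OF i] unfolding additive_subgroup_def by blast
    thus "C \<subseteq> join i" unfolding join_def by (rule subset_set_plus_right)
    show "P (join i)" using N(1)[OF i] P unfolding join_def subgroup_lattice_def by blast
    show "join i \<subseteq> B" unfolding join_def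
      by (rule set_plus_subset_subgroup[OF sg[OF P(3)] N(3)[OF i] \<open>C \<subseteq> B\<close>])
  next
    fix i assume "i < k"
    thus "join i \<subseteq> join (Suc i)" unfolding join_def by (intro set_plus_mono_left N_mono)
  qed
  then obtain M2 where M2: "strict_chain P C B M2 (card ?Ijoin)" by blast
  have "{..<k} \<subseteq> ?Imeet \<union> ?Ijoin"
  proof
    fix i assume "i \<in> {..<k}"
    hence i: "i < k" by simp
    have "meet i \<subseteq> meet (Suc i)" "join i \<subseteq> join (Suc i)"
      using set_plus_mono_left[OF N_mono[OF i]] N_mono[OF i] unfolding meet_def join_def by auto
    moreover have "\<not> (meet i = meet (Suc i) \<and> join i = join (Suc i))"
      using additive_subgroup_eq_by_meet_join[OF N(4) N(4) sg[OF P(2)], of i "Suc i"] N_step[OF i] i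
      unfolding meet_def join_def by auto
    ultimately show "i \<in> ?Imeet \<union> ?Ijoin" using i by auto
  qed
  hence "k \<le> card (?Imeet \<union> ?Ijoin)" using card_mono[of "?Imeet \<union> ?Ijoin" "{..<k}"] by (simp add: card_mono)
  also have "\<dots> \<le> card ?Imeet + card ?Ijoin" by (rule card_Un_le)
  finally have "enat k \<le> enat (card ?Imeet) + enat (card ?Ijoin)" by simp
  also have "\<dots> \<le> chain_length P A C + chain_length P C B"
    by (rule add_mono[OF chain_length_ge[OF M1] chain_length_ge[OF M2]])
  finally show "enat k \<le> chain_length P A C + chain_length P C B" .
qed

lemma chain_length_concat:
  assumes "chain_length P A C = enat a" "chain_length P C B = enat b" "P A" "P C" "A \<subseteq> C" "C \<subseteq> B"
  shows "enat (a + b) \<le> chain_length P A B"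
proof -
  obtain N1 where N1: "strict_chain P A C N1 a" using chain_length_attained assms by blast
  obtain N2 where N2: "strict_chain P C B N2 b" using chain_length_attained assms by blast
  define L where "L i = (if i \<le> a then N1 i else N2 (i - a))" for i
  have N1a: "N1 a \<subseteq> N2 0" using N1 N2 unfolding strict_chain_def by blast
  have "strict_chain P A B L (a + b)" unfolding strict_chain_def
  proof (rule conjI; intro allI impI)
    fix i assume i: "i \<le> a + b"
    show "P (L i) \<and> A \<subseteq> L i \<and> L i \<subseteq> B"
    proof (cases "i \<le> a")
      case True thus ?thesis using N1 assms(6) unfolding strict_chain_def L_def by auto
    next
      case False
      hence "i - a \<le> b" using i by auto
      thus ?thesis using N2 False assms(5) unfolding strict_chain_def L_def by auto
    qed
  next
    fix i assume i: "i < a + b"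
    consider "i < a" | "i = a" | "a < i" by linarith
    thus "L i \<subset> L (Suc i)"
    proof cases
      case 1 thus ?thesis using N1 unfolding strict_chain_def L_def by auto
    next
      case 2
      hence "N2 0 \<subset> N2 (Suc 0)" using N2 i unfolding strict_chain_def by auto
      thus ?thesis using N1a 2 unfolding L_def by auto
    next
      case 3
      hence "Suc i - a = Suc (i - a)" "i - a < b" using i by auto
      thus ?thesis using N2 3 unfolding strict_chain_def L_def by auto
    qed
  qed
  thus ?thesis by (rule chain_length_ge)
qed

text \<open>For independent A and B the intervals [A, A + B] and [0, B] are isomorphic via
  L \<mapsto> L \<inter> B and L \<mapsto> A + L.\<close>

lemma chain_length_join_interval_le:
  assumes P: "subgroup_lattice P" "P A" "P B"
  shows "chain_length P A (A + B) \<le> chain_length P {0} B"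
proof -
  have sg: "additive_subgroup X" if "P X" for X using P(1) that unfolding subgroup_lattice_def by blast
  have PAB: "P (A + B)" using P unfolding subgroup_lattice_def by blast
  have A0: "0 \<in> A" and B0: "0 \<in> B" using sg[OF P(2)] sg[OF P(3)] unfolding additive_subgroup_def by auto
  have join_eq: "X + B = A + B" if "A \<subseteq> X" "X \<subseteq> A + B" for X
    using set_plus_subset_subgroup[OF sg[OF PAB] that(2) subset_set_plus_right[OF A0]]
      set_plus_mono_left[OF that(1)] by blast
  show ?thesis
  proof (rule chain_length_le_by_strict_mono[where f="\<lambda>L. L \<inter> B"])
    fix L assume L: "P L" "A \<subseteq> L" "L \<subseteq> A + B"
    have "P (L \<inter> B)" using P(1,3) L(1) unfolding subgroup_lattice_def by blast
    thus "P (L \<inter> B) \<and> {0} \<subseteq> L \<inter> B \<and> L \<inter> B \<subseteq> B" using A0 B0 L(2) by blast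
  next
    fix L L' assume L: "P L" "A \<subseteq> L" "L' \<subseteq> A + B" "P L'" "L \<subset> L'"
    have "L + B = A + B" "L' + B = A + B" using join_eq[of L] join_eq[of L'] L by blast+
    hence "L \<inter> B \<noteq> L' \<inter> B"
      using additive_subgroup_eq_by_meet_join[OF sg[OF L(1)] sg[OF L(4)] sg[OF P(3)]] L(5) by auto
    thus "L \<inter> B \<subset> L' \<inter> B" using L(5) by blast
  qed
qed

lemma chain_length_le_join_interval:
  assumes P: "subgroup_lattice P" "P A" "P B" and AB: "A \<inter> B \<subseteq> {0}"
  shows "chain_length P {0} B \<le> chain_length P A (A + B)"
proof -
  have sg: "additive_subgroup X" if "P X" for X using P(1) that unfolding subgroup_lattice_def by blast
  have A0: "0 \<in> A" using sg[OF P(2)] unfolding additive_subgroup_def by auto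
  show ?thesis
  proof (rule chain_length_le_by_strict_mono[where f="\<lambda>L. A + L"])
    fix L assume L: "P L" "{0} \<subseteq> L" "L \<subseteq> B"
    have "P (A + L)" using P(1,2) L(1) unfolding subgroup_lattice_def by blast
    thus "P (A + L) \<and> A \<subseteq> A + L \<and> A + L \<subseteq> A + B"
      using subset_set_plus_left[of L A] set_plus_mono_right[OF L(3)] L(2) by blast
  next
    fix L L' assume L: "P L" "{0} \<subseteq> L" "L' \<subseteq> B" "P L'" "L \<subset> L'"
    obtain x where x: "x \<in> L'" "x \<notin> L" using L(5) by blast
    have "x \<notin> A + L"
    proof
      assume "x \<in> A + L"
      then obtain u l where ul: "u \<in> A" "l \<in> L" "x = u + l" by (auto simp: set_plus_def)
      have "u = x - l" using ul by simp
      moreover have "x \<in> B" "l \<in> B" using x(1) ul(2) L(3) L(5) by blast+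
      ultimately have "u \<in> B" using sg[OF P(3)] unfolding additive_subgroup_def by blast
      hence "u = 0" using ul(1) AB by blast
      thus False using ul x by simp
    qed
    moreover have "x \<in> A + L'" using subset_set_plus_right[OF A0] x(1) by blast
    ultimately show "A + L \<subset> A + L'" using set_plus_mono_right[of L L'] L(5) by blast
  qed
qed

lemma chain_length_direct_sum:
  assumes P: "subgroup_lattice P" "P {0}" "P A" "P B" and AB: "A \<inter> B \<subseteq> {0}"
    and a: "chain_length P {0} A = enat a" and b: "chain_length P {0} B = enat b"
  shows "chain_length P {0} (A + B) = enat (a + b)"
proof -
  have PAB: "P (A + B)" using P unfolding subgroup_lattice_def by blast
  have "0 \<in> A" "0 \<in> B" using P(1,3,4) unfolding subgroup_lattice_def additive_subgroup_def by blast+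
  hence A0: "{0} \<subseteq> A" and A_AB: "A \<subseteq> A + B" using subset_set_plus_left by blast+
  have cAB: "chain_length P A (A + B) = enat b"
    using chain_length_join_interval_le[OF P(1,3,4)] chain_length_le_join_interval[OF P(1,3,4) AB] b
    by simp
  have "chain_length P {0} (A + B) \<le> chain_length P {0} A + chain_length P A (A + B)"
    by (rule chain_length_split_le[OF P(1,3) PAB A0 A_AB])
  moreover have "enat (a + b) \<le> chain_length P {0} (A + B)"
    by (rule chain_length_concat[OF a cAB P(2,3) A0 A_AB])
  ultimately show ?thesis using a cAB by simp
qed

lemma chain_length_from_empty:
  assumes "\<And>X. P X \<Longrightarrow> 0 \<in> X"
  shows "chain_length P {} M = chain_length P {0} M"
proof (rule antisym)
  show "chain_length P {} M \<le> chain_length P {0} M"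
    by (rule chain_length_le_by_strict_mono[where f=id]) (auto dest: assms)
  show "chain_length P {0} M \<le> chain_length P {} M" by (rule chain_length_antimono) auto
qed

section \<open>Gradings\<close>

locale grading =
  fixes G :: "'i \<Rightarrow> 'a::ab_group_add set"
  assumes zero_mem: "0 \<in> G n"
    and add_mem: "x \<in> G n \<Longrightarrow> y \<in> G n \<Longrightarrow> x + y \<in> G n"
    and uminus_mem: "x \<in> G n \<Longrightarrow> - x \<in> G n"
    and unique_decomposition:
      "\<exists>!c. finite {n. c n \<noteq> 0} \<and> (\<forall>n. c n \<in> G n) \<and> x = (\<Sum>n\<in>{n. c n \<noteq> 0}. c n)"
begin

definition component :: "'a \<Rightarrow> 'i \<Rightarrow> 'a" where
  "component x = (THE c. finite {n. c n \<noteq> 0} \<and> (\<forall>n. c n \<in> G n) \<and> x = (\<Sum>n\<in>{n. c n \<noteq> 0}. c n))"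

lemma component_decomposes:
  "finite {n. component x n \<noteq> 0} \<and> (\<forall>n. component x n \<in> G n) \<and>
   x = (\<Sum>n\<in>{n. component x n \<noteq> 0}. component x n)"
  unfolding component_def by (rule theI'[OF unique_decomposition])

lemma component_mem: "component x n \<in> G n"
  using component_decomposes by blast

lemma finite_component_support: "finite {n. component x n \<noteq> 0}"
  using component_decomposes by blast

lemma component_eqI:
  assumes "finite S" "\<And>n. c n \<in> G n" "\<And>n. n \<notin> S \<Longrightarrow> c n = 0" "x = (\<Sum>n\<in>S. c n)"
  shows "component x = c"
proof -
  have supp: "{n. c n \<noteq> 0} \<subseteq> S" using assms(3) by blast
  moreover have "(\<Sum>n\<in>S. c n) = (\<Sum>n\<in>{n. c n \<noteq> 0}. c n)"
    by (rule sum.mono_neutral_right[OF assms(1) supp]) auto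
  ultimately have "finite {n. c n \<noteq> 0} \<and> (\<forall>n. c n \<in> G n) \<and> x = (\<Sum>n\<in>{n. c n \<noteq> 0}. c n)"
    using assms finite_subset by auto
  with unique_decomposition[of x] component_decomposes[of x] show ?thesis by blast
qed

lemma sum_components:
  assumes "finite S" "{n. component x n \<noteq> 0} \<subseteq> S"
  shows "x = (\<Sum>n\<in>S. component x n)"
proof -
  have "x = (\<Sum>n\<in>{n. component x n \<noteq> 0}. component x n)" using component_decomposes by blast
  also have "\<dots> = (\<Sum>n\<in>S. component x n)"
    by (rule sum.mono_neutral_left[OF assms]) auto
  finally show ?thesis .
qed

lemma component_homogeneous: "x \<in> G m \<Longrightarrow> component x = (\<lambda>n. if n = m then x else 0)"
  by (rule component_eqI[of "{m}"]) (auto intro: zero_mem)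

lemma component_same [simp]: "x \<in> G m \<Longrightarrow> component x m = x"
  by (simp add: component_homogeneous)

lemma component_other: "x \<in> G m \<Longrightarrow> n \<noteq> m \<Longrightarrow> component x n = 0"
  by (simp add: component_homogeneous)

lemma component_0 [simp]: "component 0 n = 0"
  using component_homogeneous[OF zero_mem, of undefined] by simp

lemma component_add: "component (x + y) n = component x n + component y n"
proof -
  let ?S = "{n. component x n \<noteq> 0} \<union> {n. component y n \<noteq> 0}"
  have "x = (\<Sum>n\<in>?S. component x n)" "y = (\<Sum>n\<in>?S. component y n)"
    by (rule sum_components; use finite_component_support in auto)+
  hence "component (x + y) = (\<lambda>n. component x n + component y n)"
    using finite_component_support
    by (intro component_eqI[of ?S]) (auto intro: add_mem component_mem simp: sum.distrib)
  thus ?thesis by simp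
qed

lemma component_uminus: "component (- x) n = - component x n"
  using component_add[of "- x" x n] by (simp add: eq_neg_iff_add_eq_0)

lemma component_diff: "component (x - y) n = component x n - component y n"
  using component_add[of x "- y"] component_uminus[of y] by simp

lemma component_sum: "component (sum f A) n = (\<Sum>a\<in>A. component (f a) n)"
  by (induction A rule: infinite_finite_induct) (auto simp: component_add)

lemma eq_0_iff_components_0: "x = 0 \<longleftrightarrow> (\<forall>n. component x n = 0)"
  using sum_components[of "{}" x] by auto

lemma homogeneous_eq_0: "x \<in> G m \<Longrightarrow> x \<in> G n \<Longrightarrow> m \<noteq> n \<Longrightarrow> x = 0"
  using component_same[of x m] component_other[of x n m] by simp

definition sum_of_pieces :: "'i set \<Rightarrow> 'a set" where
  "sum_of_pieces D = {\<Sum>t\<in>D. c t | c. \<forall>t. c t \<in> G t}"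

lemma sum_of_pieces_empty: "sum_of_pieces {} = {0}"
  unfolding sum_of_pieces_def using zero_mem by (auto intro: exI[of _ "\<lambda>_. 0"])

lemma sum_of_pieces_insert:
  assumes "finite D" "t \<notin> D"
  shows "sum_of_pieces (insert t D) = sum_of_pieces D + G t"
proof
  show "sum_of_pieces (insert t D) \<subseteq> sum_of_pieces D + G t"
  proof
    fix x assume "x \<in> sum_of_pieces (insert t D)"
    then obtain c where c: "\<forall>t. c t \<in> G t" "x = (\<Sum>s\<in>insert t D. c s)"
      unfolding sum_of_pieces_def by blast
    have "x = (\<Sum>s\<in>D. c s) + c t" using c(2) assms by (simp add: add.commute)
    moreover have "(\<Sum>s\<in>D. c s) \<in> sum_of_pieces D" unfolding sum_of_pieces_def using c(1) by blast
    ultimately show "x \<in> sum_of_pieces D + G t" using c(1) by blast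
  qed
  show "sum_of_pieces D + G t \<subseteq> sum_of_pieces (insert t D)"
  proof
    fix x assume "x \<in> sum_of_pieces D + G t"
    then obtain u v where uv: "u \<in> sum_of_pieces D" "v \<in> G t" "x = u + v" by (auto simp: set_plus_def)
    then obtain c where c: "\<forall>t. c t \<in> G t" "u = (\<Sum>s\<in>D. c s)" unfolding sum_of_pieces_def by blast
    have "(\<Sum>s\<in>D. (c(t := v)) s) = (\<Sum>s\<in>D. c s)" by (rule sum.cong) (use assms in auto)
    hence "x = (\<Sum>s\<in>insert t D. (c(t := v)) s)" using assms uv c by (simp add: add.commute)
    moreover have "\<forall>s. (c(t := v)) s \<in> G s" using c uv by simp
    ultimately show "x \<in> sum_of_pieces (insert t D)" unfolding sum_of_pieces_def by blast
  qed
qed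

lemma sum_of_pieces_inter_piece:
  assumes "t \<notin> D"
  shows "sum_of_pieces D \<inter> G t \<subseteq> {0}"
proof
  fix y assume y: "y \<in> sum_of_pieces D \<inter> G t"
  then obtain c where c: "\<forall>t. c t \<in> G t" "y = (\<Sum>s\<in>D. c s)" unfolding sum_of_pieces_def by blast
  have "component y t = (\<Sum>s\<in>D. component (c s) t)" unfolding c(2) by (rule component_sum)
  also have "\<dots> = 0" using assms c(1) by (intro sum.neutral) (metis component_other)
  finally show "y \<in> {0}" using y by simp
qed

lemma sum_of_pieces_eq_UNIV:
  assumes "finite D" "\<And>t. t \<notin> D \<Longrightarrow> G t = {0}"
  shows "sum_of_pieces D = UNIV"
proof -
  have "{t. component y t \<noteq> 0} \<subseteq> D" for y using assms(2) component_mem by fastforce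
  hence "y = (\<Sum>t\<in>D. component y t)" for y by (rule sum_components[OF assms(1)])
  thus ?thesis unfolding sum_of_pieces_def using component_mem by blast
qed

end

lemma acc_has_maximal:
  assumes acc: "\<forall>I::nat \<Rightarrow> 'a set. (\<forall>n. Q (I n)) \<and> (\<forall>n. I n \<subseteq> I (Suc n)) \<longrightarrow> (\<exists>N. \<forall>n\<ge>N. I n = I N)"
    and ne: "S \<noteq> {}" and SQ: "\<forall>X\<in>S. Q X"
  shows "\<exists>M\<in>S. \<forall>X\<in>S. \<not> M \<subset> X"
proof (rule ccontr)
  assume "\<not> (\<exists>M\<in>S. \<forall>X\<in>S. \<not> M \<subset> X)"
  hence step: "\<forall>M\<in>S. \<exists>X. X \<in> S \<and> M \<subset> X" by blast
  define I where "I = rec_nat (SOME X. X \<in> S) (\<lambda>_ M. SOME X. X \<in> S \<and> M \<subset> X)"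
  have I0: "I 0 = (SOME X. X \<in> S)" and IS: "\<And>n. I (Suc n) = (SOME X. X \<in> S \<and> I n \<subset> X)"
    unfolding I_def by simp_all
  have I_mem: "I n \<in> S" for n
  proof (induction n)
    case 0 show ?case unfolding I0 using ne by (simp add: some_in_eq)
  next
    case (Suc n)
    have "\<exists>X. X \<in> S \<and> I n \<subset> X" using step Suc by blast
    hence "I (Suc n) \<in> S \<and> I n \<subset> I (Suc n)" unfolding IS by (rule someI_ex)
    thus ?case by blast
  qed
  have I_strict: "I n \<subset> I (Suc n)" for n
  proof -
    have "\<exists>X. X \<in> S \<and> I n \<subset> X" using step I_mem[of n] by blast
    hence "I (Suc n) \<in> S \<and> I n \<subset> I (Suc n)" unfolding IS by (rule someI_ex)
    thus ?thesis by blast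
  qed
  have "(\<forall>n. Q (I n)) \<and> (\<forall>n. I n \<subseteq> I (Suc n))" using I_mem I_strict SQ by blast
  hence "\<exists>N. \<forall>n\<ge>N. I n = I N" by (rule acc[rule_format])
  then obtain N where "\<forall>n\<ge>N. I n = I N" ..
  hence "I (Suc N) = I N" by (metis le_SucI order_refl)
  thus False using I_strict[of N] by blast
qed

lemma dcc_has_minimal:
  assumes dcc: "\<forall>I::nat \<Rightarrow> 'a set. (\<forall>n. Q (I n)) \<and> (\<forall>n. I (Suc n) \<subseteq> I n) \<longrightarrow> (\<exists>N. \<forall>n\<ge>N. I n = I N)"
    and ne: "S \<noteq> {}" and SQ: "\<forall>X\<in>S. Q X"
  shows "\<exists>M\<in>S. \<forall>X\<in>S. \<not> X \<subset> M"
proof -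
  have acc: "\<forall>I::nat \<Rightarrow> 'a set. (\<forall>n. Q (- I n)) \<and> (\<forall>n. I n \<subseteq> I (Suc n)) \<longrightarrow> (\<exists>N. \<forall>n\<ge>N. I n = I N)"
  proof (intro allI impI)
    fix I :: "nat \<Rightarrow> 'a set" assume h: "(\<forall>n. Q (- I n)) \<and> (\<forall>n. I n \<subseteq> I (Suc n))"
    have "(\<forall>n. Q ((\<lambda>n. - I n) n)) \<and> (\<forall>n. (\<lambda>n. - I n) (Suc n) \<subseteq> (\<lambda>n. - I n) n)" using h by auto
    hence "\<exists>N. \<forall>n\<ge>N. - I n = - I N" by (rule dcc[rule_format, of "\<lambda>n. - I n"])
    then obtain N where N: "\<forall>n\<ge>N. - I n = - I N" ..
    have "\<forall>n\<ge>N. I n = I N"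
    proof (intro allI impI)
      fix n assume "n \<ge> N" hence "- I n = - I N" using N by blast
      thus "I n = I N" by (rule compl_eq_compl_iff[THEN iffD1])
    qed
    thus "\<exists>N. \<forall>n\<ge>N. I n = I N" ..
  qed
  have ne': "uminus ` S \<noteq> {}" using ne by blast
  have SQ': "\<forall>X\<in>uminus ` S. Q (- X)" using SQ by auto
  have "\<exists>M\<in>uminus ` S. \<forall>X\<in>uminus ` S. \<not> M \<subset> X"
    by (rule acc_has_maximal[OF acc ne' SQ'])
  then obtain M' where M': "M' \<in> uminus ` S" "\<forall>X\<in>uminus ` S. \<not> M' \<subset> X" by blast
  then obtain M where M: "M \<in> S" "M' = - M" by blast
  have "\<forall>X\<in>S. \<not> X \<subset> M"
  proof
    fix X assume X: "X \<in> S"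
    hence "- X \<in> uminus ` S" by (rule imageI)
    hence "\<not> - M \<subset> - X" using M' M by blast
    thus "\<not> X \<subset> M" by (simp add: compl_less_compl_iff)
  qed
  thus ?thesis using M(1) by blast
qed

lemma is_idealD:
  "is_ideal I \<Longrightarrow> 0 \<in> I" "is_ideal I \<Longrightarrow> x \<in> I \<Longrightarrow> y \<in> I \<Longrightarrow> x + y \<in> I"
  "is_ideal I \<Longrightarrow> x \<in> I \<Longrightarrow> r * x \<in> I"
  unfolding is_ideal_def by blast+

lemma ideal_mult_right: "is_ideal I \<Longrightarrow> x \<in> I \<Longrightarrow> x * r \<in> I"
  using is_idealD(3)[of I x r] by (simp add: mult.commute)

lemma ideal_diff: "is_ideal I \<Longrightarrow> x \<in> I \<Longrightarrow> y \<in> I \<Longrightarrow> x - y \<in> I"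
  using is_idealD(2)[of I x "- y"] is_idealD(3)[of I y "- 1"] by simp

lemma ideal_sum: "is_ideal I \<Longrightarrow> (\<And>a. a \<in> A \<Longrightarrow> f a \<in> I) \<Longrightarrow> sum f A \<in> I"
  by (induction A rule: infinite_finite_induct) (auto intro: is_idealD)

definition ideal_generated :: "'r::comm_ring_1 set \<Rightarrow> 'r set" where
  "ideal_generated F = {\<Sum>f\<in>F. r f * f | r. True}"

lemma ideal_generatedI: "x = (\<Sum>f\<in>F. r f * f) \<Longrightarrow> x \<in> ideal_generated F"
  unfolding ideal_generated_def by (rule CollectI, rule exI[of _ r]) simp

lemma is_ideal_ideal_generated: "is_ideal (ideal_generated F)"
  unfolding is_ideal_def
proof (intro conjI ballI allI)
  show "0 \<in> ideal_generated F" by (rule ideal_generatedI[where r="\<lambda>_. 0"]) simp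
next
  fix x y assume "x \<in> ideal_generated F" "y \<in> ideal_generated F"
  then obtain a b where "x = (\<Sum>f\<in>F. a f * f)" "y = (\<Sum>f\<in>F. b f * f)"
    unfolding ideal_generated_def by blast
  hence "x + y = (\<Sum>f\<in>F. (a f + b f) * f)" by (simp add: sum.distrib distrib_right)
  thus "x + y \<in> ideal_generated F" by (rule ideal_generatedI)
next
  fix r x assume "x \<in> ideal_generated F"
  then obtain a where "x = (\<Sum>f\<in>F. a f * f)" unfolding ideal_generated_def by blast
  hence "r * x = (\<Sum>f\<in>F. (r * a f) * f)" by (simp add: sum_distrib_left mult.assoc)
  thus "r * x \<in> ideal_generated F" by (rule ideal_generatedI)
qed

lemma generator_mem_ideal_generated: "finite F \<Longrightarrow> x \<in> F \<Longrightarrow> x \<in> ideal_generated F"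
  by (rule ideal_generatedI[where r="\<lambda>f. if f = x then 1 else 0"])
     (simp add: if_distrib[of "\<lambda>a. a * _"] sum.delta' cong: if_cong)

lemma ideal_generated_least: "is_ideal I \<Longrightarrow> F \<subseteq> I \<Longrightarrow> ideal_generated F \<subseteq> I"
  unfolding ideal_generated_def by (auto intro!: ideal_sum is_idealD(3))

lemma noetherian_ideal_finitely_generated:
  assumes "noetherian_ring TYPE('r::comm_ring_1)" and I: "is_ideal (I :: 'r set)"
  shows "\<exists>F. finite F \<and> F \<subseteq> I \<and> I = ideal_generated F"
proof -
  have acc: "\<forall>J::nat \<Rightarrow> 'r set. (\<forall>n. is_ideal (J n)) \<and> (\<forall>n. J n \<subseteq> J (Suc n)) \<longrightarrow> (\<exists>N. \<forall>n\<ge>N. J n = J N)"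
    using assms(1) unfolding noetherian_ring_def by blast
  let ?S = "{ideal_generated F | F. finite F \<and> F \<subseteq> I}"
  have "ideal_generated {} \<in> ?S" by blast
  hence "\<exists>M\<in>?S. \<forall>X\<in>?S. \<not> M \<subset> X"
    by (intro acc_has_maximal[OF acc]) (auto intro: is_ideal_ideal_generated)
  then obtain F where F: "finite F" "F \<subseteq> I" and Fmax: "\<forall>X\<in>?S. \<not> ideal_generated F \<subset> X" by blast
  have "I \<subseteq> ideal_generated F"
  proof
    fix x assume x: "x \<in> I"
    have "ideal_generated F \<subseteq> ideal_generated (insert x F)"
      using F by (intro ideal_generated_least is_ideal_ideal_generated)
        (auto intro: generator_mem_ideal_generated)
    moreover have "x \<in> ideal_generated (insert x F)" using F by (intro generator_mem_ideal_generated) auto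
    moreover have "ideal_generated (insert x F) \<in> ?S" using F x by blast
    ultimately show "x \<in> ideal_generated F" using Fmax by blast
  qed
  thus ?thesis using F ideal_generated_least[OF I F(2)] by blast
qed

definition monomials :: "'r::comm_ring_1 set \<Rightarrow> nat \<Rightarrow> 'r set" where
  "monomials X n = (\<lambda>f. \<Prod>x\<in>X. x ^ f x) ` {f. sum f X = n}"

context
  fixes X :: "'r::comm_ring_1 set"
  assumes X: "finite X"
begin

lemma monomials_0: "monomials X 0 = {1}"
proof -
  have "(\<lambda>f. \<Prod>x\<in>X. x ^ f x) ` {f. sum f X = 0} \<subseteq> {1}" using X by auto
  moreover have "1 \<in> (\<lambda>f. \<Prod>x\<in>X. x ^ f x) ` {f. sum f X = 0}"
    by (rule image_eqI[of _ _ "\<lambda>_. 0"]) auto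
  ultimately show ?thesis unfolding monomials_def by blast
qed

lemma mem_monomials_1: "x \<in> X \<Longrightarrow> x \<in> monomials X 1"
proof -
  assume x: "x \<in> X"
  let ?f = "\<lambda>y. if y = x then 1 else (0::nat)"
  have "sum ?f X = 1" using X x by (simp add: sum.delta')
  moreover have "(\<Prod>y\<in>X. y ^ ?f y) = x"
  proof -
    have "(\<Prod>y\<in>X. y ^ ?f y) = (\<Prod>y\<in>X. if y = x then y else 1)" by (rule prod.cong) auto
    also have "\<dots> = x" using X x by (simp add: prod.delta')
    finally show ?thesis .
  qed
  ultimately show "x \<in> monomials X 1" unfolding monomials_def by (auto intro: image_eqI[of _ _ ?f])
qed

lemma monomials_mult: "m \<in> monomials X a \<Longrightarrow> m' \<in> monomials X b \<Longrightarrow> m * m' \<in> monomials X (a + b)"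
proof -
  assume "m \<in> monomials X a" "m' \<in> monomials X b"
  then obtain f g where f: "sum f X = a" "m = (\<Prod>x\<in>X. x ^ f x)" and g: "sum g X = b" "m' = (\<Prod>x\<in>X. x ^ g x)"
    unfolding monomials_def by blast
  have "m * m' = (\<Prod>x\<in>X. x ^ (f x + g x))" using f g by (simp add: power_add prod.distrib)
  moreover have "sum (\<lambda>x. f x + g x) X = a + b" using f g by (simp add: sum.distrib)
  ultimately show ?thesis unfolding monomials_def by (auto intro: image_eqI[of _ _ "\<lambda>x. f x + g x"])
qed

lemma monomials_Suc: "m \<in> monomials X (Suc n) \<Longrightarrow> \<exists>x\<in>X. \<exists>m'\<in>monomials X n. m = x * m'"
proof -
  assume "m \<in> monomials X (Suc n)"
  then obtain f where f: "sum f X = Suc n" "m = (\<Prod>x\<in>X. x ^ f x)" unfolding monomials_def by blast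
  have "\<exists>x\<in>X. f x > 0"
  proof (rule ccontr)
    assume "\<not> (\<exists>x\<in>X. f x > 0)"
    hence "sum f X = 0" by simp
    thus False using f by simp
  qed
  then obtain x where x: "x \<in> X" "f x > 0" by blast
  define g where "g = f(x := f x - 1)"
  have "sum f X = f x + sum f (X - {x})" using X x by (simp add: sum.remove)
  moreover have "sum g X = g x + sum g (X - {x})" using X x by (simp add: sum.remove)
  moreover have "sum g (X - {x}) = sum f (X - {x})" unfolding g_def by (rule sum.cong) auto
  ultimately have sg: "sum g X = n" using f(1) x(2) unfolding g_def by simp
  have "(\<Prod>y\<in>X. y ^ f y) = x ^ f x * (\<Prod>y\<in>X - {x}. y ^ f y)" using X x by (simp add: prod.remove)
  moreover have "(\<Prod>y\<in>X. y ^ g y) = x ^ g x * (\<Prod>y\<in>X - {x}. y ^ g y)" using X x by (simp add: prod.remove)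
  moreover have "(\<Prod>y\<in>X - {x}. y ^ g y) = (\<Prod>y\<in>X - {x}. y ^ f y)" unfolding g_def by (rule prod.cong) auto
  moreover have "x ^ f x = x * x ^ g x" unfolding g_def using x(2)
    by (simp add: power_Suc[symmetric] del: power_Suc)
  ultimately have "m = x * (\<Prod>y\<in>X. y ^ g y)" using f(2) by (simp add: mult.assoc)
  moreover have "(\<Prod>y\<in>X. y ^ g y) \<in> monomials X n" unfolding monomials_def using sg by blast
  ultimately show ?thesis using x(1) by blast
qed

lemma finite_monomials: "finite (monomials X n)"
proof (induction n)
  case 0 thus ?case by (simp add: monomials_0)
next
  case (Suc n)
  have "monomials X (Suc n) \<subseteq> (\<lambda>(x, m). x * m) ` (X \<times> monomials X n)"
    using monomials_Suc by fastforce
  thus ?case using Suc X finite_subset by blast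
qed

lemma monomial_divisible_by_power:
  assumes n: "n > sum N X" and m: "m \<in> monomials X n"
  shows "\<exists>x\<in>X. \<exists>r. m = x ^ N x * r"
proof -
  obtain f where f: "sum f X = n" "m = (\<Prod>x\<in>X. x ^ f x)" using m unfolding monomials_def by blast
  have "\<exists>x\<in>X. f x \<ge> N x"
  proof (rule ccontr)
    assume "\<not> (\<exists>x\<in>X. f x \<ge> N x)"
    hence "\<forall>x\<in>X. f x \<le> N x" by auto
    hence "sum f X \<le> sum N X" by (intro sum_mono) blast
    thus False using f n by simp
  qed
  then obtain x where x: "x \<in> X" "f x \<ge> N x" by blast
  have "m = x ^ f x * (\<Prod>y\<in>X - {x}. y ^ f y)" using X x f by (simp add: prod.remove)
  also have "x ^ f x = x ^ N x * x ^ (f x - N x)" using x(2) by (simp add: power_add[symmetric])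
  finally have "m = x ^ N x * (x ^ (f x - N x) * (\<Prod>y\<in>X - {x}. y ^ f y))" by (simp add: mult.assoc)
  thus ?thesis using x(1) by blast
qed

end

section \<open>Graded rings and R_0-spans\<close>

definition R0_span :: "('r::comm_ring_1 \<Rightarrow> 'm::ab_group_add \<Rightarrow> 'm) \<Rightarrow> (nat \<Rightarrow> 'r set) \<Rightarrow> 'm set \<Rightarrow> 'm set" where
  "R0_span scale Rg Y = {\<Sum>y\<in>Y. scale (a y) y | a. \<forall>y. a y \<in> Rg 0}"

lemma module_mult: "module ((*) :: 'r::comm_ring_1 \<Rightarrow> 'r \<Rightarrow> 'r)"
  by unfold_locales (simp_all add: algebra_simps)

locale graded_comm_ring =
  fixes Rg :: "nat \<Rightarrow> 'r::comm_ring_1 set"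
  assumes graded: "graded_ring Rg"
begin

sublocale R: grading Rg
proof -
  have "(\<forall>n. 0 \<in> Rg n \<and> (\<forall>x\<in>Rg n. \<forall>y\<in>Rg n. x + y \<in> Rg n) \<and> (\<forall>x\<in>Rg n. - x \<in> Rg n)) \<and>
    (\<forall>r. \<exists>!c. finite {n. c n \<noteq> 0} \<and> (\<forall>n. c n \<in> Rg n) \<and> r = (\<Sum>n\<in>{n. c n \<noteq> 0}. c n))"
    using graded unfolding graded_ring_def by (elim conjE) (intro conjI)
  thus "grading Rg" by unfold_locales auto
qed

lemma one_mem: "1 \<in> Rg 0"
  using graded unfolding graded_ring_def by blast

lemma mult_mem: "a \<in> Rg m \<Longrightarrow> b \<in> Rg n \<Longrightarrow> a * b \<in> Rg (m + n)"
  using graded unfolding graded_ring_def by blast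

lemma mult_mem_same: "a \<in> Rg 0 \<Longrightarrow> b \<in> Rg n \<Longrightarrow> a * b \<in> Rg n"
  using mult_mem[of a 0 b n] by simp

lemma component_mult_over:
  assumes "finite S" "finite T" "{i. R.component r i \<noteq> 0} \<subseteq> S" "{j. R.component s j \<noteq> 0} \<subseteq> T"
  shows "R.component (r * s) n =
    (\<Sum>i\<in>S. \<Sum>j\<in>T. if i + j = n then R.component r i * R.component s j else 0)"
proof -
  have "r * s = (\<Sum>i\<in>S. \<Sum>j\<in>T. R.component r i * R.component s j)"
    using R.sum_components[OF assms(1,3)] R.sum_components[OF assms(2,4)] by (metis sum_product)
  moreover have "R.component (R.component r i * R.component s j) n =
      (if i + j = n then R.component r i * R.component s j else 0)" for i j
    using R.component_homogeneous[OF mult_mem[OF R.component_mem R.component_mem]] by auto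
  ultimately show ?thesis by (simp add: R.component_sum)
qed

lemma component_mult:
  "R.component (r * s) n = (\<Sum>i\<in>{i. R.component r i \<noteq> 0}. \<Sum>j\<in>{j. R.component s j \<noteq> 0}.
      if i + j = n then R.component r i * R.component s j else 0)"
  by (rule component_mult_over) (auto intro: R.finite_component_support)

lemma component_mult_0: "R.component (r * s) 0 = R.component r 0 * R.component s 0"
proof -
  let ?S = "insert 0 {i. R.component r i \<noteq> 0}" and ?T = "insert 0 {j. R.component s j \<noteq> 0}"
  have fin: "finite ?S" "finite ?T" using R.finite_component_support by auto
  have "R.component (r * s) 0 =
      (\<Sum>i\<in>?S. \<Sum>j\<in>?T. if i + j = 0 then R.component r i * R.component s j else 0)"
    by (rule component_mult_over[OF fin]) auto
  also have "\<dots> = (\<Sum>i\<in>?S. if i = 0 then R.component r 0 * R.component s 0 else 0)"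
  proof (rule sum.cong[OF refl])
    fix i
    have "(\<Sum>j\<in>?T. if i + j = 0 then R.component r i * R.component s j else 0)
        = (\<Sum>j\<in>?T. if j = 0 then (if i = 0 then R.component r i * R.component s 0 else 0) else 0)"
      by (rule sum.cong) auto
    also have "\<dots> = (if i = 0 then R.component r 0 * R.component s 0 else 0)"
      using fin by (subst sum.delta) auto
    finally show "(\<Sum>j\<in>?T. if i + j = 0 then R.component r i * R.component s j else 0)
        = (if i = 0 then R.component r 0 * R.component s 0 else 0)" .
  qed
  also have "\<dots> = R.component r 0 * R.component s 0" using fin by (subst sum.delta) auto
  finally show ?thesis .
qed

lemma component_R0_mult: "a \<in> Rg 0 \<Longrightarrow> R.component (a * s) n = a * R.component s n"
proof -
  assume a: "a \<in> Rg 0"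
  have "R.component (a * s) = (\<lambda>n. a * R.component s n)"
  proof (rule R.component_eqI[OF R.finite_component_support[of s]])
    show "a * s = (\<Sum>n\<in>{n. R.component s n \<noteq> 0}. a * R.component s n)"
      using R.sum_components[OF R.finite_component_support, of s] by (metis order_refl sum_distrib_left)
  qed (use a in \<open>auto intro: mult_mem_same R.component_mem\<close>)
  thus ?thesis by simp
qed

lemma mem_Rplus_iff: "r \<in> Rplus Rg \<longleftrightarrow> R.component r 0 = 0"
proof
  assume "r \<in> Rplus Rg"
  then obtain c where c: "finite {n. c n \<noteq> 0}" "\<forall>n. c n \<in> Rg n" "c 0 = 0" "r = (\<Sum>n\<in>{n. c n \<noteq> 0}. c n)"
    unfolding Rplus_def by blast
  have "R.component r = c" by (rule R.component_eqI[OF c(1)]) (use c in auto)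
  thus "R.component r 0 = 0" using c by simp
next
  assume "R.component r 0 = 0"
  thus "r \<in> Rplus Rg" unfolding Rplus_def using R.component_decomposes[of r] by blast
qed

lemma is_ideal_Rplus: "is_ideal (Rplus Rg)"
  unfolding is_ideal_def by (simp add: mem_Rplus_iff R.component_add component_mult_0)

lemma component_1_mult_Rplus:
  assumes "R.component r 0 = 0" "R.component s 0 = 0"
  shows "R.component (r * s) 1 = 0"
  unfolding component_mult
proof (intro sum.neutral ballI)
  fix i j assume "i \<in> {i. R.component r i \<noteq> 0}" "j \<in> {j. R.component s j \<noteq> 0}"
  with assms have "i \<noteq> 0" "j \<noteq> 0" by (metis mem_Collect_eq)+
  thus "(if i + j = 1 then R.component r i * R.component s j else 0) = 0" by simp
qed

context
  fixes scale :: "'r \<Rightarrow> 'm::ab_group_add \<Rightarrow> 'm"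
  assumes module: "module scale"
begin

interpretation M: module scale by (rule module)

lemma R0_spanI: "\<forall>y. a y \<in> Rg 0 \<Longrightarrow> u = (\<Sum>y\<in>Y. scale (a y) y) \<Longrightarrow> u \<in> R0_span scale Rg Y"
  unfolding R0_span_def by blast

lemma R0_span_zero: "0 \<in> R0_span scale Rg Y"
  by (rule R0_spanI[of "\<lambda>_. 0"]) (simp_all add: R.zero_mem)

lemma R0_spanE:
  "u \<in> R0_span scale Rg Y \<Longrightarrow> (\<And>a. \<forall>y. a y \<in> Rg 0 \<Longrightarrow> u = (\<Sum>y\<in>Y. scale (a y) y) \<Longrightarrow> P) \<Longrightarrow> P"
  unfolding R0_span_def by blast

lemma R0_span_add: "u \<in> R0_span scale Rg Y \<Longrightarrow> v \<in> R0_span scale Rg Y \<Longrightarrow> u + v \<in> R0_span scale Rg Y"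
proof -
  assume u: "u \<in> R0_span scale Rg Y" and v: "v \<in> R0_span scale Rg Y"
  obtain a where a: "\<forall>y. a y \<in> Rg 0" "u = (\<Sum>y\<in>Y. scale (a y) y)" using u by (rule R0_spanE)
  obtain b where b: "\<forall>y. b y \<in> Rg 0" "v = (\<Sum>y\<in>Y. scale (b y) y)" using v by (rule R0_spanE)
  have "u + v = (\<Sum>y\<in>Y. scale (a y + b y) y)" using a b by (simp add: sum.distrib M.scale_left_distrib)
  moreover have "\<forall>y. a y + b y \<in> Rg 0" using a b R.add_mem by blast
  ultimately show ?thesis by (intro R0_spanI)
qed

lemma R0_span_scale: "c \<in> Rg 0 \<Longrightarrow> u \<in> R0_span scale Rg Y \<Longrightarrow> scale c u \<in> R0_span scale Rg Y"
proof -
  assume c: "c \<in> Rg 0" and u: "u \<in> R0_span scale Rg Y"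
  obtain a where a: "\<forall>y. a y \<in> Rg 0" "u = (\<Sum>y\<in>Y. scale (a y) y)" using u by (rule R0_spanE)
  have "scale c u = (\<Sum>y\<in>Y. scale (c * a y) y)" using a by (simp add: M.scale_sum_right)
  moreover have "\<forall>y. c * a y \<in> Rg 0" using a c mult_mem_same by blast
  ultimately show ?thesis by (intro R0_spanI)
qed

lemma R0_span_sum: "(\<And>a. a \<in> A \<Longrightarrow> f a \<in> R0_span scale Rg Y) \<Longrightarrow> sum f A \<in> R0_span scale Rg Y"
  by (induction A rule: infinite_finite_induct) (auto intro: R0_span_add R0_span_zero)

lemma R0_span_base: "finite Y \<Longrightarrow> y \<in> Y \<Longrightarrow> c \<in> Rg 0 \<Longrightarrow> scale c y \<in> R0_span scale Rg Y"
proof -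
  assume fY: "finite Y" and y: "y \<in> Y" and c: "c \<in> Rg 0"
  have "(\<Sum>z\<in>Y. scale (if z = y then c else 0) z) = (\<Sum>z\<in>Y. if z = y then scale c z else 0)"
    by (rule sum.cong) auto
  also have "\<dots> = scale c y" using fY y by (simp add: sum.delta)
  finally show ?thesis using c R.zero_mem by (intro R0_spanI[where a="\<lambda>z. if z = y then c else 0"]) auto
qed

lemma R0_span_mono: "finite W \<Longrightarrow> Y \<subseteq> W \<Longrightarrow> R0_span scale Rg Y \<subseteq> R0_span scale Rg W"
  by (auto elim!: R0_spanE intro!: R0_span_sum R0_span_base)

lemma R0_span_empty: "R0_span scale Rg {} = {0}"
  using R0_span_zero by (auto elim: R0_spanE)

lemma R0_span_insert:
  assumes "finite Y" "y \<notin> Y" "u \<in> R0_span scale Rg (insert y Y)"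
  shows "\<exists>a c. a \<in> Rg 0 \<and> c \<in> R0_span scale Rg Y \<and> u = c + scale a y"
proof -
  obtain a where a: "\<forall>z. a z \<in> Rg 0" "u = (\<Sum>z\<in>insert y Y. scale (a z) z)"
    using assms(3) by (rule R0_spanE)
  hence "u = (\<Sum>z\<in>Y. scale (a z) z) + scale (a y) y" using assms(1,2) by (simp add: add.commute)
  moreover have "(\<Sum>z\<in>Y. scale (a z) z) \<in> R0_span scale Rg Y" using a(1) by (rule R0_spanI) simp
  ultimately show ?thesis using a(1) by blast
qed

end

lemma R0_span_mult:
  assumes "finite W" "\<forall>y\<in>Y. \<forall>z\<in>Z. y * z \<in> W" "u \<in> R0_span (*) Rg Y" "v \<in> R0_span (*) Rg Z"
  shows "u * v \<in> R0_span (*) Rg W"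
proof -
  obtain a where a: "\<forall>y. a y \<in> Rg 0" "u = (\<Sum>y\<in>Y. a y * y)"
    using assms(3) by (rule R0_spanE[OF module_mult])
  obtain b where b: "\<forall>y. b y \<in> Rg 0" "v = (\<Sum>z\<in>Z. b z * z)"
    using assms(4) by (rule R0_spanE[OF module_mult])
  note ab = a b
  have "u * v = (\<Sum>y\<in>Y. \<Sum>z\<in>Z. (a y * b z) * (y * z))"
    unfolding ab(2,4) sum_product by (simp add: ac_simps)
  also have "\<dots> \<in> R0_span (*) Rg W"
    using ab assms(2) by (intro R0_span_sum[OF module_mult] R0_span_base[OF module_mult assms(1)] mult_mem_same) auto
  finally show ?thesis .
qed

end

context graded_comm_ring
begin

text \<open>The degree-one components of finitely many generators of the ideal R_+ span R_1 over R_0.\<close>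

lemma R1_finitely_generated:
  assumes "noetherian_ring TYPE('r)"
  shows "\<exists>X. finite X \<and> X \<subseteq> Rg 1 \<and> Rg 1 \<subseteq> R0_span (*) Rg X"
proof -
  obtain F where F: "finite F" "F \<subseteq> Rplus Rg" "Rplus Rg = ideal_generated F"
    using noetherian_ideal_finitely_generated[OF assms is_ideal_Rplus] by blast
  define X where "X = (\<lambda>f. R.component f 1) ` F"
  have "Rg 1 \<subseteq> R0_span (*) Rg X"
  proof
    fix y assume y: "y \<in> Rg 1"
    hence "y \<in> Rplus Rg" using R.component_other[OF y] by (simp add: mem_Rplus_iff)
    then obtain r where r: "y = (\<Sum>f\<in>F. r f * f)" unfolding F(3) ideal_generated_def by blast
    have "R.component (r f * f) 1 = R.component (r f) 0 * R.component f 1" if f: "f \<in> F" for f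
    proof -
      have "R.component f 0 = 0" using f F(2) mem_Rplus_iff by blast
      moreover have "R.component (r f - R.component (r f) 0) 0 = 0"
        by (simp add: R.component_diff R.component_mem)
      ultimately have "R.component ((r f - R.component (r f) 0) * f) 1 = 0"
        by (intro component_1_mult_Rplus)
      moreover have "r f * f = R.component (r f) 0 * f + (r f - R.component (r f) 0) * f"
        by (simp add: algebra_simps)
      ultimately show ?thesis by (metis R.component_add add_0_right component_R0_mult R.component_mem)
    qed
    hence "y = (\<Sum>f\<in>F. R.component (r f) 0 * R.component f 1)"
      using R.component_same[OF y] unfolding r by (simp add: R.component_sum)
    also have "\<dots> \<in> R0_span (*) Rg X"
      using F(1) unfolding X_def
      by (intro R0_span_sum[OF module_mult] R0_span_base[OF module_mult] R.component_mem) auto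
    finally show "y \<in> R0_span (*) Rg X" .
  qed
  moreover have "finite X" "X \<subseteq> Rg 1" unfolding X_def using F(1) R.component_mem by auto
  ultimately show ?thesis by blast
qed

text \<open>The elements all of whose components lie in the span of the monomials of their degree
  form a subring containing R_0 and R_1, hence everything.\<close>

lemma piece_subset_span_monomials:
  assumes std: "standard_graded Rg" and X: "finite X" "X \<subseteq> Rg 1" "Rg 1 \<subseteq> R0_span (*) Rg X"
  shows "Rg n \<subseteq> R0_span (*) Rg (monomials X n)"
proof -
  let ?S = "{r. \<forall>n. R.component r n \<in> R0_span (*) Rg (monomials X n)}"
  note span_zero = R0_span_zero[OF module_mult]
  have fin: "finite (monomials X n)" for n by (rule finite_monomials[OF X(1)])
  have piece_in_S: "Rg m \<subseteq> ?S" if "Rg m \<subseteq> R0_span (*) Rg (monomials X m)" for m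
    using that span_zero by (auto simp: R.component_homogeneous)
  have "Rg 0 \<subseteq> R0_span (*) Rg (monomials X 0)"
  proof
    fix x assume "x \<in> Rg 0"
    hence "x * 1 \<in> R0_span (*) Rg (monomials X 0)"
      by (intro R0_span_base[OF module_mult fin]) (simp_all add: monomials_0[OF X(1)])
    thus "x \<in> R0_span (*) Rg (monomials X 0)" by simp
  qed
  moreover have "Rg 1 \<subseteq> R0_span (*) Rg (monomials X 1)"
    using X R0_span_mono[OF module_mult fin] mem_monomials_1[OF X(1)] by blast
  ultimately have R01: "Rg 0 \<union> Rg 1 \<subseteq> ?S" using piece_in_S by blast
  have mult: "x * y \<in> ?S" if "x \<in> ?S" "y \<in> ?S" for x y
  proof (intro CollectI allI)
    fix n
    have "R.component x i * R.component y j \<in> R0_span (*) Rg (monomials X (i + j))" for i j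
      using that monomials_mult[OF X(1)]
      by (intro R0_span_mult[OF fin, where Y="monomials X i" and Z="monomials X j"]) auto
    thus "R.component (x * y) n \<in> R0_span (*) Rg (monomials X n)"
      unfolding component_mult using span_zero by (auto intro!: R0_span_sum[OF module_mult])
  qed
  have add: "x + y \<in> ?S" and uminus: "- x \<in> ?S" if "x \<in> ?S" "y \<in> ?S" for x y
    using that R0_span_scale[OF module_mult R.uminus_mem[OF one_mem]]
    by (auto simp: R.component_add R.component_uminus intro: R0_span_add[OF module_mult])
  have "subring_hull (Rg 0 \<union> Rg 1) \<subseteq> ?S"
    unfolding subring_hull_def
  proof (rule Inter_lower, rule CollectI, intro conjI)
    show "0 \<in> ?S" "1 \<in> ?S" using R01 R.zero_mem one_mem by blast+
  qed (use R01 add mult uminus in blast)+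
  hence all: "R.component r n \<in> R0_span (*) Rg (monomials X n)" for r
    using std unfolding standard_graded_def by blast
  show ?thesis
  proof
    fix y assume "y \<in> Rg n"
    thus "y \<in> R0_span (*) Rg (monomials X n)" using all[of y] by simp
  qed
qed

end

section \<open>Modules of dimension zero\<close>

definition ideal_adjoin :: "'r::comm_ring_1 set \<Rightarrow> 'r \<Rightarrow> 'r set" where
  "ideal_adjoin P a = {p + r * a | p r. p \<in> P}"

lemma is_ideal_ideal_adjoin:
  assumes P: "is_ideal P" shows "is_ideal (ideal_adjoin P a)"
  unfolding is_ideal_def
proof (intro conjI ballI allI)
  have "0 + 0 * a \<in> ideal_adjoin P a" unfolding ideal_adjoin_def using is_idealD(1)[OF P] by blast
  thus "0 \<in> ideal_adjoin P a" by simp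
next
  fix x y assume "x \<in> ideal_adjoin P a" "y \<in> ideal_adjoin P a"
  then obtain p r q s where h: "p \<in> P" "q \<in> P" "x = p + r * a" "y = q + s * a"
    unfolding ideal_adjoin_def by blast
  have "x + y = (p + q) + (r + s) * a" using h by (simp add: algebra_simps)
  moreover have "p + q \<in> P" using is_idealD(2)[OF P h(1,2)] .
  ultimately show "x + y \<in> ideal_adjoin P a" unfolding ideal_adjoin_def by blast
next
  fix r x assume "x \<in> ideal_adjoin P a"
  then obtain p s where ps: "p \<in> P" "x = p + s * a" unfolding ideal_adjoin_def by blast
  have "r * x = r * p + (r * s) * a" using ps by (simp add: algebra_simps)
  moreover have "r * p \<in> P" using is_idealD(3)[OF P ps(1)] .
  ultimately show "r * x \<in> ideal_adjoin P a" unfolding ideal_adjoin_def by blast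
qed

lemma subset_ideal_adjoin: "is_ideal P \<Longrightarrow> P \<subseteq> ideal_adjoin P a"
  unfolding ideal_adjoin_def by (force intro: exI[of _ 0])

lemma mem_ideal_adjoin: "is_ideal P \<Longrightarrow> a \<in> ideal_adjoin P a"
  unfolding ideal_adjoin_def by (force dest: is_idealD(1) intro: exI[of _ 1])

lemma maximal_ideal_avoiding_powers_prime:
  assumes P: "is_ideal P" "\<forall>N. x ^ N \<notin> P"
    and max: "\<And>J. is_ideal J \<Longrightarrow> P \<subset> J \<Longrightarrow> \<exists>N. x ^ N \<in> J"
  shows "is_prime_ideal P"
  unfolding is_prime_ideal_def
proof (intro conjI allI impI)
  show "P \<noteq> UNIV" using P(2)[rule_format, of 0] by auto
next
  fix a b assume ab: "a * b \<in> P"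
  show "a \<in> P \<or> b \<in> P"
  proof (rule ccontr)
    assume "\<not> (a \<in> P \<or> b \<in> P)"
    hence "P \<subset> ideal_adjoin P a" "P \<subset> ideal_adjoin P b"
      using subset_ideal_adjoin[OF P(1)] mem_ideal_adjoin[OF P(1)] by blast+
    then obtain m n where "x ^ m \<in> ideal_adjoin P a" "x ^ n \<in> ideal_adjoin P b"
      using max is_ideal_ideal_adjoin[OF P(1)] by metis
    then obtain p1 r1 p2 r2 where h: "p1 \<in> P" "x ^ m = p1 + r1 * a" "p2 \<in> P" "x ^ n = p2 + r2 * b"
      unfolding ideal_adjoin_def by blast
    have "x ^ (m + n) = p1 * (p2 + r2 * b) + p2 * (r1 * a) + (r1 * r2) * (a * b)"
      by (simp add: power_add h algebra_simps)
    also have "\<dots> \<in> P"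
      using ideal_mult_right[OF P(1) h(1)] ideal_mult_right[OF P(1) h(3)] is_idealD(3)[OF P(1) ab]
      by (intro is_idealD(2)[OF P(1)])
    finally show False using P(2) by blast
  qed
qed (rule P(1))

context graded_comm_ring
begin

lemma component_mult_lowest_mod_ideal:
  assumes P: "is_ideal P" and a: "\<And>k. k < i \<Longrightarrow> R.component a k \<in> P"
    and b: "\<And>l. l < j \<Longrightarrow> R.component b l \<in> P"
  shows "R.component (a * b) (i + j) - R.component a i * R.component b j \<in> P"
proof -
  let ?A = "insert i {k. R.component a k \<noteq> 0}" and ?B = "insert j {l. R.component b l \<noteq> 0}"
  have fin: "finite ?A" "finite ?B" using R.finite_component_support by auto
  let ?T = "\<lambda>k l. if k + l = i + j then R.component a k * R.component b l else 0"
  let ?D = "\<lambda>k l. if k = i \<and> l = j then R.component a i * R.component b j else 0"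
  have "R.component (a * b) (i + j) = (\<Sum>k\<in>?A. \<Sum>l\<in>?B. ?T k l)"
    by (rule component_mult_over[OF fin]) auto
  moreover have "(\<Sum>k\<in>?A. \<Sum>l\<in>?B. ?D k l) = R.component a i * R.component b j"
  proof -
    have "(\<Sum>l\<in>?B. ?D k l) = (if k = i then R.component a i * R.component b j else 0)" for k
    proof -
      have "(\<Sum>l\<in>?B. ?D k l) =
          (\<Sum>l\<in>?B. if l = j then (if k = i then R.component a i * R.component b j else 0) else 0)"
        by (rule sum.cong) auto
      also have "\<dots> = (if k = i then R.component a i * R.component b j else 0)"
        using fin(2) by (simp add: sum.delta)
      finally show ?thesis .
    qed
    hence "(\<Sum>k\<in>?A. \<Sum>l\<in>?B. ?D k l) = (\<Sum>k\<in>?A. if k = i then R.component a i * R.component b j else 0)"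
      by simp
    also have "\<dots> = R.component a i * R.component b j" using fin(1) by (simp add: sum.delta)
    finally show ?thesis .
  qed
  moreover have "?T k l - ?D k l \<in> P" for k l
  proof (cases "k + l = i + j \<and> (k, l) \<noteq> (i, j)")
    case True
    hence "k < i \<or> l < j" by auto
    thus ?thesis using True a b P by (auto intro: ideal_mult_right is_idealD(3))
  next
    case False
    thus ?thesis using is_idealD(1)[OF P] by auto
  qed
  hence "(\<Sum>k\<in>?A. \<Sum>l\<in>?B. ?T k l - ?D k l) \<in> P" by (intro ideal_sum[OF P])
  ultimately show ?thesis by (simp add: sum_subtractf)
qed

lemma is_prime_ideal_homogeneous_core:
  assumes P: "is_prime_ideal P"
  shows "is_prime_ideal {r. \<forall>n. R.component r n \<in> P}" (is "is_prime_ideal ?Q")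
  unfolding is_prime_ideal_def
proof (intro conjI allI impI)
  have I: "is_ideal P" and one: "1 \<notin> P"
    using P is_idealD(3)[of P 1] unfolding is_prime_ideal_def by auto
  show "is_ideal ?Q" unfolding is_ideal_def
    using I by (auto simp: R.component_add component_mult intro!: ideal_sum is_idealD)
  show "?Q \<noteq> UNIV"
  proof
    assume "?Q = UNIV"
    hence "R.component 1 0 \<in> P" by blast
    thus False using one R.component_same[OF one_mem] by simp
  qed
next
  fix a b assume ab: "a * b \<in> ?Q"
  show "a \<in> ?Q \<or> b \<in> ?Q"
  proof (rule ccontr)
    assume "\<not> (a \<in> ?Q \<or> b \<in> ?Q)"
    then obtain i0 j0 where "R.component a i0 \<notin> P" "R.component b j0 \<notin> P" by auto
    define i where "i = (LEAST i. R.component a i \<notin> P)"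
    define j where "j = (LEAST j. R.component b j \<notin> P)"
    have ai: "R.component a i \<notin> P" and bj: "R.component b j \<notin> P"
      unfolding i_def j_def by (rule LeastI, fact)+
    have "R.component a k \<in> P" if "k < i" for k using not_less_Least that unfolding i_def by blast
    moreover have "R.component b l \<in> P" if "l < j" for l using not_less_Least that unfolding j_def by blast
    ultimately have "R.component (a * b) (i + j) - R.component a i * R.component b j \<in> P"
      using P unfolding is_prime_ideal_def by (blast intro: component_mult_lowest_mod_ideal)
    moreover have "R.component (a * b) (i + j) \<in> P" using ab by blast
    ultimately have "R.component (a * b) (i + j)
        - (R.component (a * b) (i + j) - R.component a i * R.component b j) \<in> P"
      using P unfolding is_prime_ideal_def by (blast intro: ideal_diff)
    hence "R.component a i * R.component b j \<in> P" by simp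
    thus False using P ai bj unfolding is_prime_ideal_def by blast
  qed
qed

lemma is_prime_ideal_component_0_preimage:
  assumes P: "is_prime_ideal P"
  shows "is_prime_ideal {r. R.component r 0 \<in> P}"
  unfolding is_prime_ideal_def
proof (intro conjI allI impI)
  have I: "is_ideal P" and one: "1 \<notin> P"
    using P is_idealD(3)[of P 1] unfolding is_prime_ideal_def by auto
  show "is_ideal {r. R.component r 0 \<in> P}"
    using I unfolding is_ideal_def by (simp add: R.component_add component_mult_0)
  show "{r. R.component r 0 \<in> P} \<noteq> UNIV"
  proof
    assume "{r. R.component r 0 \<in> P} = UNIV"
    hence "R.component 1 0 \<in> P" by blast
    thus False using one R.component_same[OF one_mem] by simp
  qed
next
  fix a b assume "a * b \<in> {r. R.component r 0 \<in> P}"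
  thus "a \<in> {r. R.component r 0 \<in> P} \<or> b \<in> {r. R.component r 0 \<in> P}"
    using P unfolding is_prime_ideal_def by (simp add: component_mult_0)
qed

end

locale graded_ring_module = graded_comm_ring Rg
  for Rg :: "nat \<Rightarrow> 'r::comm_ring_1 set" +
  fixes scale :: "'r \<Rightarrow> 'm::ab_group_add \<Rightarrow> 'm" and Eg :: "int \<Rightarrow> 'm set"
  assumes graded_mod: "graded_module scale Rg Eg"
begin

sublocale module scale
  using graded_mod unfolding graded_module_def by blast

sublocale E: grading Eg
proof -
  have "(\<forall>n. 0 \<in> Eg n \<and> (\<forall>x\<in>Eg n. \<forall>y\<in>Eg n. x + y \<in> Eg n) \<and> (\<forall>x\<in>Eg n. - x \<in> Eg n)) \<and>
    (\<forall>x. \<exists>!c. finite {n. c n \<noteq> 0} \<and> (\<forall>n. c n \<in> Eg n) \<and> x = (\<Sum>n\<in>{n. c n \<noteq> 0}. c n))"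
    using graded_mod unfolding graded_module_def by (elim conjE) (intro conjI)
  thus "grading Eg" by unfold_locales auto
qed

lemma scale_mem: "a \<in> Rg m \<Longrightarrow> x \<in> Eg t \<Longrightarrow> scale a x \<in> Eg (int m + t)"
  using graded_mod unfolding graded_module_def by blast

lemma component_scale_homogeneous:
  assumes x: "x \<in> Eg t"
  shows "E.component (scale r x) t' = (if t \<le> t' then scale (R.component r (nat (t' - t))) x else 0)"
proof -
  let ?S = "{i. R.component r i \<noteq> 0}"
  have fin: "finite ?S" by (rule R.finite_component_support)
  have "scale r x = (\<Sum>i\<in>?S. scale (R.component r i) x)"
    using R.sum_components[OF fin, of r] by (metis order_refl scale_sum_left)
  hence "E.component (scale r x) t' = (\<Sum>i\<in>?S. E.component (scale (R.component r i) x) t')"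
    by (simp add: E.component_sum)
  also have "\<dots> = (\<Sum>i\<in>?S. if i = nat (t' - t) \<and> t \<le> t' then scale (R.component r i) x else 0)"
  proof (rule sum.cong[OF refl])
    fix i
    have "scale (R.component r i) x \<in> Eg (int i + t)" by (rule scale_mem[OF R.component_mem x])
    moreover have "(t' = int i + t) = (i = nat (t' - t) \<and> t \<le> t')" by auto
    ultimately show "E.component (scale (R.component r i) x) t' =
        (if i = nat (t' - t) \<and> t \<le> t' then scale (R.component r i) x else 0)"
      by (simp add: E.component_homogeneous)
  qed
  also have "\<dots> = (if t \<le> t' then scale (R.component r (nat (t' - t))) x else 0)"
    using fin by (simp add: sum.delta')
  finally show ?thesis .
qed

lemma is_ideal_annihilator: "is_ideal (annihilator scale)"
  unfolding is_ideal_def annihilator_def by (auto simp: scale_left_distrib simp flip: scale_scale)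

lemma component_mem_annihilator:
  assumes r: "r \<in> annihilator scale"
  shows "R.component r n \<in> annihilator scale"
proof -
  have homogeneous: "scale (R.component r n) y = 0" if y: "y \<in> Eg t" for y t
  proof -
    have "scale (R.component r n) y = E.component (scale r y) (t + int n)"
      using component_scale_homogeneous[OF y, of r "t + int n"] by simp
    thus ?thesis using r unfolding annihilator_def by simp
  qed
  have "scale (R.component r n) e = 0" for e
  proof -
    let ?S = "{t. E.component e t \<noteq> 0}"
    have "e = (\<Sum>t\<in>?S. E.component e t)" by (rule E.sum_components[OF E.finite_component_support]) simp
    hence "scale (R.component r n) e = (\<Sum>t\<in>?S. scale (R.component r n) (E.component e t))"
      by (metis scale_sum_right)
    also have "\<dots> = 0" by (rule sum.neutral) (auto intro: homogeneous E.component_mem)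
    finally show ?thesis .
  qed
  thus ?thesis unfolding annihilator_def by blast
qed

text \<open>Otherwise an ideal P maximal among those containing ann E and avoiding the powers of x is
  prime. Its homogeneous core and its preimage under r \<mapsto> r_0 are primes containing ann E, and
  the inclusion between them is proper because x lies in the second only: a chain of length one,
  contradicting dim E = 0.\<close>

lemma R1_nilpotent_on_dim0:
  assumes noe: "noetherian_ring TYPE('r)" and dim: "module_dim_eq scale 0" and x: "x \<in> Rg 1"
  shows "\<exists>N. x ^ N \<in> annihilator scale"
proof (rule ccontr)
  assume "\<not> (\<exists>N. x ^ N \<in> annihilator scale)"
  have acc: "\<forall>I::nat \<Rightarrow> 'r set. (\<forall>n. is_ideal (I n)) \<and> (\<forall>n. I n \<subseteq> I (Suc n)) \<longrightarrow> (\<exists>N. \<forall>n\<ge>N. I n = I N)"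
    using noe unfolding noetherian_ring_def by blast
  let ?S = "{I. is_ideal I \<and> annihilator scale \<subseteq> I \<and> (\<forall>N. x ^ N \<notin> I)}"
  have "annihilator scale \<in> ?S" using is_ideal_annihilator \<open>\<not> (\<exists>N. _)\<close> by blast
  hence ne: "?S \<noteq> {}" by blast
  have "\<forall>X\<in>?S. is_ideal X" by simp
  with acc ne have "\<exists>M\<in>?S. \<forall>X\<in>?S. \<not> M \<subset> X" by (rule acc_has_maximal[where Q=is_ideal])
  then obtain P where "P \<in> ?S" and P_max_S: "\<forall>X\<in>?S. \<not> P \<subset> X" by blast
  hence P: "is_ideal P" "annihilator scale \<subseteq> P" "\<forall>N. x ^ N \<notin> P" by simp_all
  have P_max: "\<exists>N. x ^ N \<in> J" if "is_ideal J" "P \<subset> J" for J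
  proof (rule ccontr)
    assume "\<not> (\<exists>N. x ^ N \<in> J)"
    hence "J \<in> ?S" using that P(2) by auto
    thus False using P_max_S that(2) by blast
  qed
  have prime: "is_prime_ideal P" by (rule maximal_ideal_avoiding_powers_prime[OF P(1,3) P_max])
  define core where "core = {r. \<forall>n. R.component r n \<in> P}"
  define J where "J = {r. R.component r 0 \<in> P}"
  have "R.component x n = (if n = 1 then x else 0)" for n using R.component_homogeneous[OF x] by simp
  hence "x \<in> J" "x \<notin> core"
    using P(3)[rule_format, of 1] is_idealD(1)[OF P(1)] unfolding core_def J_def by auto
  moreover have "core \<subseteq> J" unfolding core_def J_def by blast
  moreover have "annihilator scale \<subseteq> core" unfolding core_def using component_mem_annihilator P(2) by blast
  ultimately have "prime_chain_ann scale (Suc 0)"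
    using is_prime_ideal_homogeneous_core[OF prime] is_prime_ideal_component_0_preimage[OF prime]
    unfolding prime_chain_ann_def core_def J_def
    by (intro exI[of _ "\<lambda>i. if i = 0 then core else J"]) (auto simp: core_def J_def)
  thus False using dim unfolding module_dim_eq_def by blast
qed

end

section \<open>Lengths over R_0\<close>

definition is_R0_submodule :: "('r::comm_ring_1 \<Rightarrow> 'm::ab_group_add \<Rightarrow> 'm) \<Rightarrow> (nat \<Rightarrow> 'r set) \<Rightarrow> 'm set \<Rightarrow> bool" where
  "is_R0_submodule scale Rg N \<longleftrightarrow> 0 \<in> N \<and> (\<forall>x\<in>N. \<forall>y\<in>N. x + y \<in> N) \<and> (\<forall>a\<in>Rg 0. \<forall>x\<in>N. scale a x \<in> N)"

lemma r0_length_eq_chain_length: "r0_length scale Rg M = chain_length (is_R0_submodule scale Rg) {0} M"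
proof -
  have "r0_submodule scale Rg M N = (is_R0_submodule scale Rg N \<and> {} \<subseteq> N \<and> N \<subseteq> M)" for N
    unfolding r0_submodule_def is_R0_submodule_def by blast
  hence "r0_length scale Rg M = chain_length (is_R0_submodule scale Rg) {} M"
    unfolding r0_length_def chain_length_def strict_chain_def by simp
  also have "\<dots> = chain_length (is_R0_submodule scale Rg) {0} M"
    by (rule chain_length_from_empty) (simp add: is_R0_submodule_def)
  finally show ?thesis .
qed

context graded_comm_ring
begin

lemma subgroup_lattice_ideals_R0: "subgroup_lattice (is_ideal_in (Rg 0))"
  unfolding subgroup_lattice_def
proof (intro conjI allI impI)
  fix X assume X: "is_ideal_in (Rg 0) X"
  have "x + (- 1) * y \<in> X" if "x \<in> X" "y \<in> X" for x y
    using X that R.uminus_mem[OF one_mem] unfolding is_ideal_in_def by blast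
  thus "additive_subgroup X" using X unfolding is_ideal_in_def additive_subgroup_def by auto
next
  fix X Y assume X: "is_ideal_in (Rg 0) X" and Y: "is_ideal_in (Rg 0) Y"
  show "is_ideal_in (Rg 0) (X \<inter> Y)" using X Y unfolding is_ideal_in_def by blast
  show "is_ideal_in (Rg 0) (X + Y)" unfolding is_ideal_in_def
  proof (intro conjI ballI)
    show "X + Y \<subseteq> Rg 0" using X Y R.add_mem unfolding is_ideal_in_def set_plus_def by blast
    show "0 \<in> X + Y" using X Y unfolding is_ideal_in_def by (metis add_0 set_plus_intro)
  next
    fix u v assume "u \<in> X + Y" "v \<in> X + Y"
    then obtain a b c d where h: "a \<in> X" "b \<in> Y" "u = a + b" "c \<in> X" "d \<in> Y" "v = c + d"
      by (auto simp: set_plus_def)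
    have "a + c \<in> X" "b + d \<in> Y" using h X Y unfolding is_ideal_in_def by blast+
    moreover have "u + v = (a + c) + (b + d)" using h by (simp add: algebra_simps)
    ultimately show "u + v \<in> X + Y" by (metis set_plus_intro)
  next
    fix r u assume r: "r \<in> Rg 0" and "u \<in> X + Y"
    then obtain a b where h: "a \<in> X" "b \<in> Y" "u = a + b" by (auto simp: set_plus_def)
    have "r * a \<in> X" "r * b \<in> Y" using h X Y r unfolding is_ideal_in_def by blast+
    moreover have "r * u = r * a + r * b" using h by (simp add: algebra_simps)
    ultimately show "r * u \<in> X + Y" by (metis set_plus_intro)
  qed
qed

text \<open>Chains of ideals of R_0 lift to chains of ideals of R by taking degree-zero preimages.\<close>

lemma acc_ideals_R0:
  assumes "noetherian_ring TYPE('r)"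
  shows "\<forall>I::nat \<Rightarrow> 'r set. (\<forall>n. is_ideal_in (Rg 0) (I n)) \<and> (\<forall>n. I n \<subseteq> I (Suc n)) \<longrightarrow>
    (\<exists>N. \<forall>n\<ge>N. I n = I N)"
proof (intro allI impI)
  fix I :: "nat \<Rightarrow> 'r set" assume h: "(\<forall>n. is_ideal_in (Rg 0) (I n)) \<and> (\<forall>n. I n \<subseteq> I (Suc n))"
  define J where "J n = {r. R.component r 0 \<in> I n}" for n
  have "is_ideal (J n)" for n
    using h R.component_mem[of _ 0] unfolding is_ideal_def is_ideal_in_def J_def
    by (simp add: R.component_add component_mult_0)
  moreover have "J n \<subseteq> J (Suc n)" for n using h unfolding J_def by blast
  ultimately obtain N where N: "\<forall>n\<ge>N. J n = J N" using assms unfolding noetherian_ring_def by blast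
  have "I n = J n \<inter> Rg 0" for n
  proof -
    have "I n \<subseteq> Rg 0" using h unfolding is_ideal_in_def by blast
    thus ?thesis unfolding J_def using R.component_same by auto
  qed
  thus "\<exists>N. \<forall>n\<ge>N. I n = I N" using N by metis
qed

text \<open>An ideal I of infinite colength that is maximal with this property has a minimal proper
  overideal by the descending chain condition; then [I, R_0] has length at most one plus a finite
  length.\<close>

lemma finite_length_R0:
  assumes noe: "noetherian_ring TYPE('r)" and art: "artinian_ring_on (Rg 0)"
  shows "chain_length (is_ideal_in (Rg 0)) {0} (Rg 0) \<noteq> \<infinity>"
proof
  let ?P = "is_ideal_in (Rg 0)"
  have dcc: "\<forall>I::nat \<Rightarrow> 'r set. (\<forall>n. ?P (I n)) \<and> (\<forall>n. I (Suc n) \<subseteq> I n) \<longrightarrow> (\<exists>N. \<forall>n\<ge>N. I n = I N)"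
    using art unfolding artinian_ring_on_def by blast
  have PR: "?P (Rg 0)" unfolding is_ideal_in_def using R.zero_mem R.add_mem mult_mem_same by blast
  have sub: "\<And>X. ?P X \<Longrightarrow> X \<subseteq> Rg 0" unfolding is_ideal_in_def by blast
  let ?S = "{I. ?P I \<and> chain_length ?P I (Rg 0) = \<infinity>}"
  assume "chain_length ?P {0} (Rg 0) = \<infinity>"
  moreover have "?P {0}" unfolding is_ideal_in_def using R.zero_mem by auto
  ultimately have ne: "?S \<noteq> {}" by blast
  have "\<exists>M\<in>?S. \<forall>X\<in>?S. \<not> M \<subset> X" by (rule acc_has_maximal[OF acc_ideals_R0[OF noe] ne]) blast
  then obtain I where "I \<in> ?S" and I_max: "\<forall>X\<in>?S. \<not> I \<subset> X" by blast
  hence I: "?P I" "chain_length ?P I (Rg 0) = \<infinity>" by simp_all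
  have "I \<noteq> Rg 0" using I(2) chain_length_refl[of ?P "Rg 0"] by auto
  hence ne_T: "{J. ?P J \<and> I \<subset> J} \<noteq> {}" using PR sub[OF I(1)] by blast
  moreover have "\<forall>X\<in>{J. ?P J \<and> I \<subset> J}. ?P X" by blast
  ultimately have "\<exists>M\<in>{J. ?P J \<and> I \<subset> J}. \<forall>X\<in>{J. ?P J \<and> I \<subset> J}. \<not> X \<subset> M"
    by (rule dcc_has_minimal[OF dcc])
  then obtain N where "N \<in> {J. ?P J \<and> I \<subset> J}" and N_min: "\<forall>X\<in>{J. ?P J \<and> I \<subset> J}. \<not> X \<subset> N"
    by blast
  hence N: "?P N" "I \<subset> N" by simp_all
  have le1: "chain_length ?P I N \<le> enat 1"
  proof (rule chain_length_leI)
    fix L k assume c: "strict_chain ?P I N L k"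
    show "enat k \<le> enat 1"
    proof (rule ccontr)
      assume "\<not> enat k \<le> enat 1"
      hence k2: "Suc (Suc 0) \<le> k" by simp
      have "L 0 \<subset> L (Suc 0)" "L (Suc 0) \<subset> L (Suc (Suc 0))"
        "I \<subseteq> L 0" "L (Suc (Suc 0)) \<subseteq> N" "?P (L (Suc 0))"
        using c k2 unfolding strict_chain_def by auto
      hence "L (Suc 0) \<in> {J. ?P J \<and> I \<subset> J}" "L (Suc 0) \<subset> N" by auto
      thus False using N_min by blast
    qed
  qed
  have "N \<notin> ?S" using I_max N(2) by blast
  then obtain b where b: "chain_length ?P N (Rg 0) = enat b"
    using N(1) by (cases "chain_length ?P N (Rg 0)") auto
  have "chain_length ?P I (Rg 0) \<le> chain_length ?P I N + chain_length ?P N (Rg 0)"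
    using N(2) sub[OF N(1)] by (intro chain_length_split_le[OF subgroup_lattice_ideals_R0 N(1) PR]) auto
  also have "\<dots> \<le> enat 1 + enat b" using le1 b by (intro add_mono) simp_all
  finally show False using I(2) by simp
qed

context
  fixes scale :: "'r \<Rightarrow> 'm::ab_group_add \<Rightarrow> 'm"
  assumes module: "module scale"
begin

interpretation M: module scale by (rule module)

lemma subgroup_lattice_R0_submodules: "subgroup_lattice (is_R0_submodule scale Rg)"
  unfolding subgroup_lattice_def
proof (intro conjI allI impI)
  fix X assume X: "is_R0_submodule scale Rg X"
  have "x + scale (- 1) y \<in> X" if "x \<in> X" "y \<in> X" for x y
    using X that R.uminus_mem[OF one_mem] unfolding is_R0_submodule_def by blast
  thus "additive_subgroup X" using X unfolding is_R0_submodule_def additive_subgroup_def by auto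
next
  fix X Y assume X: "is_R0_submodule scale Rg X" and Y: "is_R0_submodule scale Rg Y"
  show "is_R0_submodule scale Rg (X \<inter> Y)" using X Y unfolding is_R0_submodule_def by blast
  show "is_R0_submodule scale Rg (X + Y)" unfolding is_R0_submodule_def
  proof (intro conjI ballI)
    show "0 \<in> X + Y" using X Y unfolding is_R0_submodule_def by (metis add_0 set_plus_intro)
  next
    fix u v assume "u \<in> X + Y" "v \<in> X + Y"
    then obtain a b c d where h: "a \<in> X" "b \<in> Y" "u = a + b" "c \<in> X" "d \<in> Y" "v = c + d"
      by (auto simp: set_plus_def)
    have "a + c \<in> X" "b + d \<in> Y" using h X Y unfolding is_R0_submodule_def by blast+
    moreover have "u + v = (a + c) + (b + d)" using h by (simp add: algebra_simps)
    ultimately show "u + v \<in> X + Y" by (metis set_plus_intro)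
  next
    fix r u assume r: "r \<in> Rg 0" and "u \<in> X + Y"
    then obtain a b where h: "a \<in> X" "b \<in> Y" "u = a + b" by (auto simp: set_plus_def)
    have "scale r a \<in> X" "scale r b \<in> Y" using h X Y r unfolding is_R0_submodule_def by blast+
    moreover have "scale r u = scale r a + scale r b" using h by (simp add: M.scale_right_distrib)
    ultimately show "scale r u \<in> X + Y" by (metis set_plus_intro)
  qed
qed

lemma is_R0_submodule_R0_span: "is_R0_submodule scale Rg (R0_span scale Rg Y)"
  unfolding is_R0_submodule_def
  using R0_span_zero[OF module] R0_span_add[OF module] R0_span_scale[OF module] by blast

text \<open>Adjoining y adds at most the length of R_0: an R_0-submodule L between the two spans is
  determined by the ideal of coefficients a with a y \<in> L.\<close>

lemma chain_length_R0_span_insert: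
  assumes Y: "finite Y" "y \<notin> Y"
  shows "chain_length (is_R0_submodule scale Rg) (R0_span scale Rg Y) (R0_span scale Rg (insert y Y))
    \<le> chain_length (is_ideal_in (Rg 0)) {0} (Rg 0)"
proof (rule chain_length_le_by_strict_mono[where f="\<lambda>L. {a \<in> Rg 0. scale a y \<in> L}"])
  fix L assume L: "is_R0_submodule scale Rg L"
  show "is_ideal_in (Rg 0) {a \<in> Rg 0. scale a y \<in> L} \<and> {0} \<subseteq> {a \<in> Rg 0. scale a y \<in> L}
      \<and> {a \<in> Rg 0. scale a y \<in> L} \<subseteq> Rg 0"
    using L R.zero_mem R.add_mem mult_mem_same
    unfolding is_ideal_in_def is_R0_submodule_def by (auto simp: M.scale_left_distrib simp flip: M.scale_scale)
next
  fix L L' assume L: "is_R0_submodule scale Rg L" "R0_span scale Rg Y \<subseteq> L"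
    "L' \<subseteq> R0_span scale Rg (insert y Y)" "is_R0_submodule scale Rg L'" "L \<subset> L'"
  obtain z where z: "z \<in> L'" "z \<notin> L" using L(5) by blast
  obtain a c where ac: "a \<in> Rg 0" "c \<in> R0_span scale Rg Y" "z = c + scale a y"
    using R0_span_insert[OF module Y] z(1) L(3) by blast
  have "c \<in> L'" using ac(2) L(2,5) by blast
  hence "scale a y \<in> L'"
    using additive_subgroup_def subgroup_lattice_R0_submodules z(1) L(4) ac(3)
    unfolding subgroup_lattice_def by (metis add_diff_cancel_left')
  moreover have "scale a y \<notin> L"
    using z ac L(1,2) unfolding is_R0_submodule_def by blast
  ultimately show "{a \<in> Rg 0. scale a y \<in> L} \<subset> {a \<in> Rg 0. scale a y \<in> L'}" using ac(1) L(5) by blast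
qed

lemma chain_length_R0_span_le:
  assumes L0: "chain_length (is_ideal_in (Rg 0)) {0} (Rg 0) = enat L0" and Y: "finite Y"
  shows "chain_length (is_R0_submodule scale Rg) {0} (R0_span scale Rg Y) \<le> enat (card Y * L0)"
  using Y
proof (induction Y rule: finite_induct)
  case empty
  thus ?case by (simp add: R0_span_empty[OF module] chain_length_refl)
next
  case (insert y Y)
  let ?P = "is_R0_submodule scale Rg"
  have "chain_length ?P {0} (R0_span scale Rg (insert y Y))
      \<le> chain_length ?P {0} (R0_span scale Rg Y) + chain_length ?P (R0_span scale Rg Y) (R0_span scale Rg (insert y Y))"
    using R0_span_zero[OF module] R0_span_mono[OF module, of "insert y Y" Y] insert(1)
    by (intro chain_length_split_le subgroup_lattice_R0_submodules is_R0_submodule_R0_span) auto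
  also have "\<dots> \<le> enat (card Y * L0) + enat L0"
    using insert(3) chain_length_R0_span_insert[OF insert(1,2)] L0 by (intro add_mono) simp_all
  finally show ?case using insert(1,2) by (simp add: add.commute)
qed

end

end

context graded_ring_module
begin

lemma is_R0_submodule_piece: "is_R0_submodule scale Rg (Eg t)"
  unfolding is_R0_submodule_def using E.zero_mem E.add_mem scale_mem[of _ 0] by simp

lemma is_R0_submodule_sum_of_pieces: "finite D \<Longrightarrow> is_R0_submodule scale Rg (E.sum_of_pieces D)"
proof (induction D rule: finite_induct)
  case empty
  thus ?case unfolding E.sum_of_pieces_empty is_R0_submodule_def by simp
next
  case (insert t D)
  thus ?case unfolding E.sum_of_pieces_insert[OF insert(1,2)]
    using subgroup_lattice_R0_submodules[OF module_axioms] is_R0_submodule_piece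
    unfolding subgroup_lattice_def by blast
qed

lemma chain_length_sum_of_pieces:
  assumes "finite D" "\<And>t. t \<in> D \<Longrightarrow> chain_length (is_R0_submodule scale Rg) {0} (Eg t) = enat (L t)"
  shows "chain_length (is_R0_submodule scale Rg) {0} (E.sum_of_pieces D) = enat (\<Sum>t\<in>D. L t)"
  using assms
proof (induction D rule: finite_induct)
  case empty
  thus ?case by (simp add: E.sum_of_pieces_empty chain_length_refl zero_enat_def)
next
  case (insert t D)
  have "is_R0_submodule scale Rg {0}" unfolding is_R0_submodule_def by simp
  hence "chain_length (is_R0_submodule scale Rg) {0} (E.sum_of_pieces D + Eg t) = enat ((\<Sum>t\<in>D. L t) + L t)"
    using insert E.sum_of_pieces_inter_piece[OF insert(2)]
    by (intro chain_length_direct_sum subgroup_lattice_R0_submodules[OF module_axioms]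
        is_R0_submodule_sum_of_pieces is_R0_submodule_piece) auto
  thus ?case using insert(1,2) by (simp add: E.sum_of_pieces_insert add.commute)
qed

lemma r0_length_UNIV_eq_sum:
  assumes "finite D" "\<And>t. t \<notin> D \<Longrightarrow> Eg t = {0}" "\<And>t. r0_length scale Rg (Eg t) = enat (L t)"
  shows "r0_length scale Rg UNIV = enat (\<Sum>t\<in>D. L t)"
  using chain_length_sum_of_pieces[OF assms(1), of L] assms
  by (simp add: r0_length_eq_chain_length E.sum_of_pieces_eq_UNIV)

text \<open>Above the top degree T everything vanishes, so R_+ kills E_T; hence the top degree of
  E is also the top degree of its R_+-torsion.\<close>

lemma reg_dim0_eq_top_degree:
  assumes top: "Eg T \<noteq> {0}" and above: "\<And>t. T < t \<Longrightarrow> Eg t = {0}"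
  shows "reg_dim0 scale Rg Eg = ereal (real_of_int T)"
proof -
  let ?H = "{n. H0_Rplus scale Rg \<inter> Eg n \<noteq> {0}}"
  have "0 \<in> H0_Rplus scale Rg" unfolding H0_Rplus_def by (intro CollectI exI[of _ 0]) simp
  have H_le: "n \<le> T" if "n \<in> ?H" for n
  proof (rule ccontr)
    assume "\<not> n \<le> T"
    hence "Eg n = {0}" using above by simp
    thus False using that \<open>0 \<in> H0_Rplus scale Rg\<close> by blast
  qed
  have T_H: "T \<in> ?H"
  proof -
    obtain y where y: "y \<in> Eg T" "y \<noteq> 0" using top E.zero_mem by blast
    have "scale r y = 0" if "r \<in> Rplus Rg" for r
    proof -
      have "E.component (scale r y) n = 0" for n
        using component_scale_homogeneous[OF y(1), of r n] mem_Rplus_iff[of r] that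
          above[of n] E.component_mem[of "scale r y" n]
        by (cases "T < n"; cases "T = n") auto
      thus ?thesis using E.eq_0_iff_components_0 by blast
    qed
    hence "y \<in> H0_Rplus scale Rg" unfolding H0_Rplus_def by (intro CollectI exI[of _ 1]) simp
    thus ?thesis using y by blast
  qed
  have "a0 scale Rg Eg = ereal (real_of_int T)"
    unfolding a0_def
  proof (rule antisym)
    show "Sup ((\<lambda>n. ereal (real_of_int n)) ` ?H) \<le> ereal (real_of_int T)"
    proof (rule Sup_least)
      fix y assume "y \<in> (\<lambda>n. ereal (real_of_int n)) ` ?H"
      then obtain n where "n \<in> ?H" "y = ereal (real_of_int n)" by blast
      thus "y \<le> ereal (real_of_int T)" using H_le by simp
    qed
    show "ereal (real_of_int T) \<le> Sup ((\<lambda>n. ereal (real_of_int n)) ` ?H)"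
      using T_H by (intro Sup_upper) blast
  qed
  moreover have "{a0 scale Rg Eg + ereal (real i) | i. i \<in> {0..(0::nat)}} = {a0 scale Rg Eg}" by auto
  ultimately show ?thesis unfolding reg_dim0_def by simp
qed

end

section \<open>Graded modules with finitely many homogeneous generators\<close>

lemma (in module) finite_spanning_subset:
  assumes "finite F" "span F = UNIV" "span G = UNIV"
  shows "\<exists>G'\<subseteq>G. finite G' \<and> span G' = UNIV"
proof -
  have "\<forall>f\<in>F. \<exists>t. finite t \<and> t \<subseteq> G \<and> f \<in> span t"
  proof
    fix f assume "f \<in> F"
    have "f \<in> span G" using assms(3) by simp
    then obtain t r where tr: "f = (\<Sum>a\<in>t. scale (r a) a)" "finite t" "t \<subseteq> G" unfolding span_explicit by blast
    have "f \<in> span t" unfolding tr(1) by (intro span_sum span_scale span_base)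
    thus "\<exists>t. finite t \<and> t \<subseteq> G \<and> f \<in> span t" using tr by blast
  qed
  then obtain T where T: "\<forall>f\<in>F. finite (T f) \<and> T f \<subseteq> G \<and> f \<in> span (T f)" by metis
  have "F \<subseteq> span (\<Union>f\<in>F. T f)"
  proof
    fix f assume f: "f \<in> F"
    hence "f \<in> span (T f)" using T by blast
    moreover have "span (T f) \<subseteq> span (\<Union>f\<in>F. T f)" by (rule span_mono) (use f in blast)
    ultimately show "f \<in> span (\<Union>f\<in>F. T f)" by blast
  qed
  hence "span F \<subseteq> span (\<Union>f\<in>F. T f)" using span_mono span_span by metis
  hence "span (\<Union>f\<in>F. T f) = UNIV" using assms(2) by blast
  moreover have "finite (\<Union>f\<in>F. T f)" "(\<Union>f\<in>F. T f) \<subseteq> G" using assms(1) T by blast+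
  ultimately show ?thesis by blast
qed

lemma minimal_homogeneous_generators_facts:
  assumes mod: "module scale" and fg: "finitely_generated_module scale"
    and mg: "minimal_homogeneous_generators scale Eg G"
  shows "finite G" "0 \<notin> G" "G \<subseteq> (\<Union>n. Eg n)" "module.span scale G = UNIV"
proof -
  interpret module scale by (rule mod)
  show G: "G \<subseteq> (\<Union>n. Eg n)" and sp: "span G = UNIV" using mg unfolding minimal_homogeneous_generators_def by blast+
  have minl: "\<And>H. H \<subset> G \<Longrightarrow> span H \<noteq> UNIV" using mg unfolding minimal_homogeneous_generators_def by blast
  obtain F where F: "finite F" "span F = UNIV" using fg unfolding finitely_generated_module_def by blast
  obtain G' where "G' \<subseteq> G" "finite G'" "span G' = UNIV" using finite_spanning_subset[OF F sp] by blast
  thus "finite G" using minl by blast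
  show "0 \<notin> G"
  proof
    assume z: "0 \<in> G"
    have "G \<subseteq> span (G - {0})"
    proof
      fix g assume "g \<in> G"
      thus "g \<in> span (G - {0})" by (cases "g = 0") (auto intro: span_zero span_base)
    qed
    hence "span G \<subseteq> span (G - {0})" using span_mono span_span by metis
    hence "span (G - {0}) = UNIV" using sp by blast
    moreover have "G - {0} \<subset> G" using z by blast
    ultimately show False using minl by blast
  qed
qed

lemma module_dim_eq_nontrivial:
  fixes scale :: "'r::comm_ring_1 \<Rightarrow> 'm::ab_group_add \<Rightarrow> 'm"
  assumes "module_dim_eq scale k"
  shows "\<exists>y::'m. y \<noteq> 0"
proof (rule ccontr)
  assume "\<not> (\<exists>y::'m. y \<noteq> 0)"
  hence "annihilator scale = UNIV" unfolding annihilator_def by auto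
  moreover obtain P where "is_prime_ideal (P 0)" "annihilator scale \<subseteq> P 0"
    using assms unfolding module_dim_eq_def prime_chain_ann_def by auto
  ultimately show False unfolding is_prime_ideal_def by blast
qed

locale graded_module_with_generators = graded_ring_module Rg scale Eg
  for Rg :: "nat \<Rightarrow> 'r::comm_ring_1 set" and scale :: "'r \<Rightarrow> 'm::ab_group_add \<Rightarrow> 'm" and Eg +
  fixes G :: "'m set" and X :: "'r set"
  assumes finite_gens: "finite G" and gens_nonempty: "G \<noteq> {}" and zero_not_gen: "0 \<notin> G"
    and gens_homogeneous: "G \<subseteq> (\<Union>n. Eg n)" and span_gens: "span G = UNIV"
    and finite_X: "finite X" and X_degree_1: "X \<subseteq> Rg 1"
    and piece_span_monomials: "Rg n \<subseteq> R0_span (*) Rg (monomials X n)"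
begin

definition gen_degree :: "'m \<Rightarrow> int" where
  "gen_degree g = (SOME t. g \<in> Eg t)"

definition top_gen_degree :: int where
  "top_gen_degree = Max (gen_degree ` G)"

definition bottom_gen_degree :: int where
  "bottom_gen_degree = Min (gen_degree ` G)"

definition gen_products :: "int \<Rightarrow> 'm set" where
  "gen_products t = (\<lambda>(g, m). scale m g) ` (SIGMA g:{g\<in>G. gen_degree g \<le> t}. monomials X (nat (t - gen_degree g)))"

lemma gen_degree_mem: "g \<in> G \<Longrightarrow> g \<in> Eg (gen_degree g)"
  unfolding gen_degree_def using gens_homogeneous by (metis (mono_tags, lifting) UN_E someI_ex subsetD)

lemma gen_degree_unique: "g \<in> G \<Longrightarrow> g \<in> Eg t \<Longrightarrow> gen_degree g = t"
  using E.homogeneous_eq_0[OF gen_degree_mem] zero_not_gen by blast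

lemma gen_degrees_eq: "{n. \<exists>g\<in>G. g \<in> Eg n \<and> g \<noteq> 0} = gen_degree ` G"
  using gen_degree_mem gen_degree_unique zero_not_gen by blast

lemma gen_degree_bounds: "g \<in> G \<Longrightarrow> bottom_gen_degree \<le> gen_degree g \<and> gen_degree g \<le> top_gen_degree"
  unfolding bottom_gen_degree_def top_gen_degree_def using finite_gens by simp

lemma monomials_subset_piece: "monomials X n \<subseteq> Rg n"
proof (induction n)
  case 0 thus ?case using one_mem by (simp add: monomials_0[OF finite_X])
next
  case (Suc n)
  show ?case
  proof
    fix m assume "m \<in> monomials X (Suc n)"
    then obtain x m' where "x \<in> X" "m' \<in> monomials X n" "m = x * m'" using monomials_Suc[OF finite_X] by blast
    thus "m \<in> Rg (Suc n)" using mult_mem[of x 1 m' n] X_degree_1 Suc by auto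
  qed
qed

lemma finite_gen_products: "finite (gen_products t)"
  unfolding gen_products_def using finite_gens finite_monomials[OF finite_X] by auto

lemma piece_subset_R0_span_gen_products: "Eg t \<subseteq> R0_span scale Rg (gen_products t)"
proof
  fix y assume y: "y \<in> Eg t"
  obtain u where "y = (\<Sum>g\<in>G. scale (u g) g)" using span_gens span_finite[OF finite_gens] by blast
  hence "y = (\<Sum>g\<in>G. if gen_degree g \<le> t then scale (R.component (u g) (nat (t - gen_degree g))) g else 0)"
    using E.component_same[OF y]
    by (simp add: E.component_sum component_scale_homogeneous[OF gen_degree_mem])
  also have "\<dots> \<in> R0_span scale Rg (gen_products t)"
  proof (rule R0_span_sum[OF module_axioms])
    fix g assume g: "g \<in> G"
    let ?n = "nat (t - gen_degree g)"
    have "R.component (u g) ?n \<in> R0_span (*) Rg (monomials X ?n)"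
      using piece_span_monomials R.component_mem by blast
    then obtain a where a: "\<forall>m. a m \<in> Rg 0" "R.component (u g) ?n = (\<Sum>m\<in>monomials X ?n. a m * m)"
      by (rule R0_spanE[OF module_mult])
    have "scale (a m) (scale m g) \<in> R0_span scale Rg (gen_products t)"
      if "gen_degree g \<le> t" "m \<in> monomials X ?n" for m
    proof (rule R0_span_base[OF module_axioms finite_gen_products])
      show "scale m g \<in> gen_products t" using g that unfolding gen_products_def by force
    qed (use a(1) in blast)
    thus "(if gen_degree g \<le> t then scale (R.component (u g) ?n) g else 0) \<in> R0_span scale Rg (gen_products t)"
      unfolding a(2) using R0_span_zero[OF module_axioms]
      by (auto simp: scale_sum_left intro!: R0_span_sum[OF module_axioms])
  qed
  finally show "y \<in> R0_span scale Rg (gen_products t)" .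
qed

lemma piece_eq_0_if_gen_products_0:
  assumes "\<And>g m. g \<in> G \<Longrightarrow> gen_degree g \<le> t \<Longrightarrow> m \<in> monomials X (nat (t - gen_degree g)) \<Longrightarrow> scale m g = 0"
  shows "Eg t = {0}"
proof -
  have "R0_span scale Rg (gen_products t) \<subseteq> {0}"
    using assms unfolding gen_products_def by (auto elim!: R0_spanE[OF module_axioms] intro!: sum.neutral)
  thus ?thesis using piece_subset_R0_span_gen_products E.zero_mem by blast
qed

lemma finite_r0_length_piece:
  assumes L0: "chain_length (is_ideal_in (Rg 0)) {0} (Rg 0) = enat L0"
  shows "\<exists>n. r0_length scale Rg (Eg t) = enat n"
proof -
  have "r0_length scale Rg (Eg t) \<le> chain_length (is_R0_submodule scale Rg) {0} (R0_span scale Rg (gen_products t))"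
    unfolding r0_length_eq_chain_length
    by (rule chain_length_antimono) (use piece_subset_R0_span_gen_products in auto)
  also have "\<dots> \<le> enat (card (gen_products t) * L0)"
    by (rule chain_length_R0_span_le[OF module_axioms L0 finite_gen_products])
  finally show ?thesis by (metis enat_ile)
qed

lemma piece_vanishes_below: "t < bottom_gen_degree \<Longrightarrow> Eg t = {0}"
  by (rule piece_eq_0_if_gen_products_0) (use gen_degree_bounds in force)

lemma piece_vanishes_above:
  assumes nil: "\<forall>x\<in>X. x ^ N x \<in> annihilator scale" and t: "top_gen_degree + sum N X < t"
  shows "Eg t = {0}"
proof (rule piece_eq_0_if_gen_products_0)
  fix g m assume g: "g \<in> G" and m: "m \<in> monomials X (nat (t - gen_degree g))"
  have "nat (t - gen_degree g) > sum N X" using gen_degree_bounds[OF g] t by linarith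
  then obtain x r where "x \<in> X" "m = x ^ N x * r"
    using monomial_divisible_by_power[OF finite_X _ m] by blast
  thus "scale m g = 0" using nil unfolding annihilator_def by (simp add: mult.commute flip: scale_scale)
qed

text \<open>Above the generator degrees E_{t+1} = R_1 E_t.\<close>

lemma piece_vanishing_propagates:
  assumes t: "top_gen_degree \<le> t" and zero: "Eg t = {0}"
  shows "Eg (t + 1) = {0}"
proof (rule piece_eq_0_if_gen_products_0)
  fix g m assume g: "g \<in> G" "gen_degree g \<le> t + 1" and m: "m \<in> monomials X (nat (t + 1 - gen_degree g))"
  have dg: "gen_degree g \<le> t" using gen_degree_bounds[OF g(1)] t by simp
  hence "nat (t + 1 - gen_degree g) = Suc (nat (t - gen_degree g))" by simp
  then obtain x m' where xm: "m' \<in> monomials X (nat (t - gen_degree g))" "m = x * m'"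
    using monomials_Suc[OF finite_X] m by metis
  have "m' \<in> Rg (nat (t - gen_degree g))" using xm(1) monomials_subset_piece by blast
  hence "scale m' g \<in> Eg t" using scale_mem[OF _ gen_degree_mem[OF g(1)]] dg by fastforce
  thus "scale m g = 0" using zero xm(2) by (simp flip: scale_scale)
qed

end

lemma r0_length_zero_module: "r0_length scale Rg {0} = 0"
  by (simp add: r0_length_eq_chain_length chain_length_refl)

context graded_ring_module
begin

lemma one_le_r0_length:
  assumes "is_R0_submodule scale Rg M" "M \<noteq> {0}"
  shows "1 \<le> r0_length scale Rg M"
proof -
  have "{0} \<subseteq> M" "is_R0_submodule scale Rg {0}" using assms(1) unfolding is_R0_submodule_def by auto
  hence "strict_chain (is_R0_submodule scale Rg) {0} M (\<lambda>i. if i = 0 then {0} else M) 1"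
    using assms unfolding strict_chain_def by auto
  thus ?thesis unfolding r0_length_eq_chain_length using chain_length_ge by (metis one_enat_def)
qed

end

context graded_module_with_generators
begin

lemma top_gen_piece_nonzero: "Eg top_gen_degree \<noteq> {0}"
proof -
  have "top_gen_degree \<in> gen_degree ` G"
    unfolding top_gen_degree_def using finite_gens gens_nonempty by (intro Max_in finite_imageI) blast+
  then obtain g where g: "g \<in> G" "top_gen_degree = gen_degree g" by blast
  have "g \<in> Eg top_gen_degree" using gen_degree_mem[OF g(1)] g(2) by simp
  moreover have "g \<noteq> 0" using g(1) zero_not_gen by blast
  ultimately show ?thesis by blast
qed

lemma bottom_le_top_gen_degree: "bottom_gen_degree \<le> top_gen_degree"
proof -
  obtain g where "g \<in> G" using gens_nonempty by blast
  thus ?thesis using gen_degree_bounds by fastforce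
qed

lemma piece_nonzero_between:
  assumes t: "top_gen_degree \<le> t" "t \<le> T" and top: "Eg T \<noteq> {0}"
  shows "Eg t \<noteq> {0}"
proof
  assume "Eg t = {0}"
  hence "Eg (t + int k) = {0}" for k
  proof (induction k)
    case (Suc k)
    have "Eg (t + int k + 1) = {0}" using Suc t(1) by (intro piece_vanishing_propagates) auto
    thus ?case by (simp add: ac_simps)
  qed simp
  from this[of "nat (T - t)"] show False using t top by simp
qed

lemma r0_length_profile:
  assumes nil: "\<forall>x\<in>X. x ^ N x \<in> annihilator scale"
    and L0: "chain_length (is_ideal_in (Rg 0)) {0} (Rg 0) = enat L0"
  obtains T L where "top_gen_degree \<le> T" "reg_dim0 scale Rg Eg = ereal (real_of_int T)"
    "\<And>t. r0_length scale Rg (Eg t) = enat (L t)"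
    "\<And>t. top_gen_degree \<le> t \<Longrightarrow> t \<le> T \<Longrightarrow> 1 \<le> L t" "\<And>t. T < t \<Longrightarrow> L t = 0"
    "\<And>t. t < bottom_gen_degree \<Longrightarrow> L t = 0"
    "r0_length scale Rg UNIV = enat (\<Sum>t\<in>{bottom_gen_degree..T}. L t)"
proof -
  let ?nonzero = "{t. Eg t \<noteq> {0}}"
  have "?nonzero \<subseteq> {bottom_gen_degree..top_gen_degree + sum N X}"
    using piece_vanishes_below piece_vanishes_above[OF nil] by force
  hence fin: "finite ?nonzero" by (rule finite_subset) simp
  define T where "T = Max ?nonzero"
  have top_T: "top_gen_degree \<le> T" unfolding T_def using fin top_gen_piece_nonzero by simp
  have T_nonzero: "Eg T \<noteq> {0}" unfolding T_def using Max_in[OF fin] top_gen_piece_nonzero by blast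
  have above: "Eg t = {0}" if "T < t" for t using that Max_ge[OF fin, of t] unfolding T_def by force
  define L where "L t = the_enat (r0_length scale Rg (Eg t))" for t
  have L: "r0_length scale Rg (Eg t) = enat (L t)" for t
  proof -
    obtain n where "r0_length scale Rg (Eg t) = enat n" using finite_r0_length_piece[OF L0] by blast
    thus ?thesis unfolding L_def by simp
  qed
  have L_0: "L t = 0" if "Eg t = {0}" for t
    using L[of t] that r0_length_zero_module[of scale Rg] by (simp add: zero_enat_def)
  have "1 \<le> L t" if "top_gen_degree \<le> t" "t \<le> T" for t
    using one_le_r0_length[OF is_R0_submodule_piece piece_nonzero_between[OF that T_nonzero]] L[of t]
    by (simp add: one_enat_def)
  moreover have "r0_length scale Rg UNIV = enat (\<Sum>t\<in>{bottom_gen_degree..T}. L t)"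
    using piece_vanishes_below above L by (intro r0_length_UNIV_eq_sum) (auto simp: not_le not_less)
  ultimately show thesis
    using that top_T reg_dim0_eq_top_degree[OF T_nonzero above] L L_0 above piece_vanishes_below by blast
qed

end

text \<open>Each of the T - d degrees above d contributes at least one to e - q.\<close>

lemma top_degree_arith:
  fixes L :: "int \<Rightarrow> nat" and a d T :: int and e q :: nat
  assumes "a \<le> d" "d \<le> T"
    and pos: "\<And>t. d \<le> t \<Longrightarrow> t \<le> T \<Longrightarrow> 1 \<le> L t" and zero: "\<And>t. T < t \<Longrightarrow> L t = 0"
    and e: "e = (\<Sum>t\<in>{a..T}. L t)" and q: "q = (\<Sum>t\<in>{a..d}. L t)"
  shows "T \<le> d + int e - int q"
    and "T = d + int e - int q \<longleftrightarrow>
      (\<forall>t. d + 1 \<le> t \<and> t \<le> d + int e - int q \<longrightarrow> L t = 1) \<and> (\<forall>t. t \<ge> d + int e - int q + 1 \<longrightarrow> L t = 0)"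
proof -
  let ?s = "\<Sum>t\<in>{d<..T}. L t"
  have "{a..T} = {a..d} \<union> {d<..T}" "{a..d} \<inter> {d<..T} = {}" using assms(1,2) by auto
  hence "e = q + ?s" unfolding e q by (simp add: sum.union_disjoint)
  hence deq: "d + int e - int q = d + int ?s" by simp
  have excess: "?s = nat (T - d) + (\<Sum>t\<in>{d<..T}. L t - 1)"
  proof -
    have "?s = (\<Sum>t\<in>{d<..T}. 1 + (L t - 1))"
    proof (rule sum.cong[OF refl])
      fix t assume "t \<in> {d<..T}"
      hence "1 \<le> L t" using pos by auto
      thus "L t = 1 + (L t - 1)" by simp
    qed
    also have "\<dots> = card {d<..T} + (\<Sum>t\<in>{d<..T}. L t - 1)" by (simp only: sum.distrib card_eq_sum)
    finally show ?thesis by simp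
  qed
  show le: "T \<le> d + int e - int q" using deq excess assms(2) by linarith
  show "T = d + int e - int q \<longleftrightarrow>
      (\<forall>t. d + 1 \<le> t \<and> t \<le> d + int e - int q \<longrightarrow> L t = 1) \<and> (\<forall>t. t \<ge> d + int e - int q + 1 \<longrightarrow> L t = 0)"
  proof
    assume T: "T = d + int e - int q"
    hence no_excess: "(\<Sum>t\<in>{d<..T}. L t - 1) = 0" using deq excess assms(2) by linarith
    have "L t = 1" if "d + 1 \<le> t" "t \<le> T" for t
    proof -
      have "L t \<le> 1" using no_excess that by simp
      thus ?thesis using that pos[of t] by simp
    qed
    thus "(\<forall>t. d + 1 \<le> t \<and> t \<le> d + int e - int q \<longrightarrow> L t = 1) \<and> (\<forall>t. t \<ge> d + int e - int q + 1 \<longrightarrow> L t = 0)"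
      using zero T by auto
  next
    assume h: "(\<forall>t. d + 1 \<le> t \<and> t \<le> d + int e - int q \<longrightarrow> L t = 1) \<and> (\<forall>t. t \<ge> d + int e - int q + 1 \<longrightarrow> L t = 0)"
    show "T = d + int e - int q"
    proof (rule ccontr)
      assume "T \<noteq> d + int e - int q"
      hence "L (T + 1) = 1" using h le assms(2) by auto
      thus False using zero[of "T + 1"] by simp
    qed
  qed
qed

lemma the_enat_sum_nonzero_lengths:
  fixes f :: "int \<Rightarrow> enat" and L :: "int \<Rightarrow> nat"
  assumes f: "\<And>t. f t = enat (L t)" and below: "\<And>t. t < a \<Longrightarrow> L t = 0"
  shows "the_enat (\<Sum>i\<in>{i. i \<le> d \<and> f i \<noteq> 0}. f i) = (\<Sum>t\<in>{a..d}. L t)"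
proof -
  have sub: "{i. i \<le> d \<and> f i \<noteq> 0} \<subseteq> {a..d}" using f below by (force simp: zero_enat_def not_less[symmetric])
  have "(\<Sum>i\<in>{i. i \<le> d \<and> f i \<noteq> 0}. f i) = enat (\<Sum>i\<in>{i. i \<le> d \<and> f i \<noteq> 0}. L i)"
    by (simp add: f of_nat_eq_enat[symmetric])
  also have "(\<Sum>i\<in>{i. i \<le> d \<and> f i \<noteq> 0}. L i) = (\<Sum>t\<in>{a..d}. L t)"
    using f by (intro sum.mono_neutral_left[OF _ sub]) (auto simp: zero_enat_def)
  finally show ?thesis by simp
qed

theorem lemma2p3:
  fixes scale :: "'r::comm_ring_1 \<Rightarrow> 'm::ab_group_add \<Rightarrow> 'm"
    and Rg :: "nat \<Rightarrow> 'r set" and Eg :: "int \<Rightarrow> 'm set" and G :: "'m set" and d :: int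
  assumes "noetherian_ring TYPE('r)"
    and "standard_graded Rg"
    and "local_ring_on (Rg 0)" and "artinian_ring_on (Rg 0)"
    and "graded_module scale Rg Eg"
    and "finitely_generated_module scale"
    and "module_dim_eq scale 0"
    and "minimal_homogeneous_generators scale Eg G"
    and "d = Max {n. \<exists>g\<in>G. g \<in> Eg n \<and> g \<noteq> 0}"
  defines "e \<equiv> the_enat (r0_length scale Rg UNIV)"
    and "q \<equiv> the_enat (\<Sum>i\<in>{i. i \<le> d \<and> r0_length scale Rg (Eg i) \<noteq> 0}. r0_length scale Rg (Eg i))"
  shows "(reg_dim0 scale Rg Eg \<le> ereal (real_of_int (d + int e - int q))) \<and>
         (reg_dim0 scale Rg Eg = ereal (real_of_int (d + int e - int q)) \<longleftrightarrow>
           ((\<forall>t. d + 1 \<le> t \<and> t \<le> d + int e - int q \<longrightarrow> r0_length scale Rg (Eg t) = 1) \<and>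
            (\<forall>t. t \<ge> d + int e - int q + 1 \<longrightarrow> r0_length scale Rg (Eg t) = 0)))"
proof -
  interpret graded_ring_module Rg scale Eg
    using assms(2,5) unfolding standard_graded_def by unfold_locales blast+
  obtain X where X: "finite X" "X \<subseteq> Rg 1" "Rg 1 \<subseteq> R0_span (*) Rg X"
    using R1_finitely_generated[OF assms(1)] by blast
  note G = minimal_homogeneous_generators_facts[OF module_axioms assms(6,8)]
  have "G \<noteq> {}" using G(4) module_dim_eq_nontrivial[OF assms(7)] by auto
  then interpret graded_module_with_generators Rg scale Eg G X
    using G X piece_subset_span_monomials[OF assms(2) X] by unfold_locales auto
  obtain N where "\<forall>x\<in>X. x ^ N x \<in> annihilator scale"
    using R1_nilpotent_on_dim0[OF assms(1,7)] X(2) by (metis subsetD)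
  moreover obtain L0 where "chain_length (is_ideal_in (Rg 0)) {0} (Rg 0) = enat L0"
    using finite_length_R0[OF assms(1,4)] by blast
  ultimately obtain T L where profile: "top_gen_degree \<le> T" "reg_dim0 scale Rg Eg = ereal (real_of_int T)"
    "\<And>t. r0_length scale Rg (Eg t) = enat (L t)"
    "\<And>t. top_gen_degree \<le> t \<Longrightarrow> t \<le> T \<Longrightarrow> 1 \<le> L t" "\<And>t. T < t \<Longrightarrow> L t = 0"
    "\<And>t. t < bottom_gen_degree \<Longrightarrow> L t = 0"
    "r0_length scale Rg UNIV = enat (\<Sum>t\<in>{bottom_gen_degree..T}. L t)"
    by (rule r0_length_profile) (rule that)
  have d: "d = top_gen_degree" unfolding assms(9) top_gen_degree_def gen_degrees_eq by (rule refl)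
  have bottom: "bottom_gen_degree \<le> d" using bottom_le_top_gen_degree d by simp
  have e: "e = (\<Sum>t\<in>{bottom_gen_degree..T}. L t)" unfolding e_def profile(7) by simp
  have q: "q = (\<Sum>t\<in>{bottom_gen_degree..d}. L t)"
    unfolding q_def using profile(3,6) by (rule the_enat_sum_nonzero_lengths)
  note arith = top_degree_arith[OF bottom profile(1)[folded d] profile(4)[folded d] profile(5) e q]
  show ?thesis unfolding profile(2) ereal.inject of_int_eq_iff
    using arith by (simp add: profile(3) one_enat_def zero_enat_def)
qed

end
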